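(* Let $f:(a,b)\to\mathbb R$, $-\infty\le a<0<b\le\infty$, be continuous, strictly increasing, with $f((a,b))=\mathbb R$. Let $\vec X^m\in\underline V^h_{\partial_0}$ satisfy assumptions $(\mathfrak A)$ and $(\mathfrak B)^h$, let $\Delta t_m>0$, and (for the second scheme) let $\kappa^m\in V^h$ be given with $(\kappa^m-\mathfrak K^m(\kappa^m))(q_j)\in(a,b)$ for all $j$. Consider the problem: find $(\delta\vec X^{m+1},\kappa^{m+1})\in\underline V^h_\partial\times V^h$ with $(\kappa^{m+1}-\mathfrak K^m(\kappa^{m+1}))(q_j)\in(a,b)$ for all $j$ such that, with $\vec X^{m+1}=\vec X^m+\delta\vec X^{m+1}$, $$\Big(\tfrac{\vec X^{m+1}-\vec X^m}{\Delta t_m},\chi\,\vec\nu^m|\vec X^m_\rho|\Big)^h=\Big(f(\kappa^{m+1}-\mathfrak K^m(\kappa^{m+1})),\chi|\vec X^m_\rho|\Big)^h-\theta\,G^m\,\big(\chi,|\vec X^m_\rho|\big)^h\quad\forall\chi\in V^h,$$ $$\Big(\kappa^{m+1}\vec\nu^m,\vec\eta\,|\vec X^m_\rho|\Big)^h+\Big(\vec X^{m+1}_\rho,\vec\eta_\rho|\vec X^m_\rho|^{-1}\Big)=-\sum_{i=1}^2\sum_{p\in\partial_iI}\widehat\varrho^{(p)}\,\vec\eta(p)\cdot\vec e_{3-i}\quad\forall\vec\eta\in\underline V^h_\partial,$$ where either $\theta=0$ (scheme $(\mathcal A^f_m)^h$) or $\theta=1$ (scheme $(\mathcal A^{f,V}_m)^h$),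 and $G^m=\frac{(\vec X^m\cdot\vec e_1,\,f(\kappa^m-\mathfrak K^m(\kappa^m))|\vec X^m_\rho|)^h}{(\vec X^m\cdot\vec e_1,|\vec X^m_\rho|)}$. Then, for either choice of $\theta$: if $a=-\infty$ and $b=\infty$, a solution exists; and for general $a<b$ there exists at most one solution.
   Context: Setup. $\vec e_1=(1,0)^T$, $\vec e_2=(0,1)^T$; "$\cdot$" is the Euclidean inner product. $I$ is either the periodic interval $\mathbb R/\mathbb Z$ (with $\partial I=\emptyset$) or $I=(0,1)$ (with $\partial I=\{0,1\}$). $\partial I=\partial_DI\cup\partial_0I\cup\partial_1I\cup\partial_2I$ is a given disjoint partition, and $\widehat\varrho^{(p)}\in\mathbb R$, $p\in\{0,1\}$, are given constants with $|\widehat\varrho^{(p)}|\le1$. Let $J\ge3$, $h=1/J$, $q_j=jh$ ($j=0,\dots,J$; $q_0=q_J$ identified in the periodic case). $V^h$ is the space of continuous functions on $\overline I$ (periodic if $I=\mathbb R/\mathbb Z$) that are affine on each $[q_{j-1},q_j]$; $\underline V^h=[V^h]^2$; $\underline V^h_{\partial_0}=\{\vec\eta\in\underline V^h:\vec\eta(\rho)\cdot\vec e_1=0\ \forall\rho\in\partial_0I\}$; $\underline V^h_\partial=\{\vec\eta\in\underline V^h_{\partial_0}:\vec\eta(\rho)\cdot\vec e_i=0\ \forall\rho\in\partial_iI,\ i=1,2;\ \vec\eta(\rho)=\vec0\ \forall\rho\in\partial_DI\}$. $(\cdot,\cdot)$ is the $L^2(I)$ inner product (with dot product for vector functions), and for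 piecewise continuous $f,g$ the mass-lumped product is $(f,g)^h=\tfrac h2\sum_{j=1}^J[(fg)(q_j^-)+(fg)(q_{j-1}^+)]$; in particular for $\psi\in V^h$, $f(\psi)$ enters $(\cdot,\cdot)^h$ only through its nodal values $f(\psi(q_j))$. For $\vec X^m\in\underline V^h_{\partial_0}$ with $|\vec X^m_\rho|>0$ a.e., set $\vec\nu^m=-[\vec X^m_\rho]^\perp/|\vec X^m_\rho|$, where $(a,b)^\perp=(b,-a)$, and let $\vec\omega^m\in\underline V^h$ be defined by $(\vec\omega^m,\vec\varphi|\vec X^m_\rho|)^h=(\vec\nu^m,\vec\varphi|\vec X^m_\rho|)$ for all $\vec\varphi\in\underline V^h$. Assumption $(\mathfrak A)$: $|\vec X^m_\rho|>0$ a.e. on $I$ and $\vec X^m(\rho)\cdot\vec e_1>0$ for all $\rho\in\overline I\setminus\partial_0I$. Assumption $(\mathfrak B)^h$: the set $\{(\vec\nu^m,\chi|\vec X^m_\rho|)^h:\chi\in V^h\}\subset\mathbb R^2$ spans $\mathbb R^2$. For $\kappa\in V^h$, $\mathfrak K^m(\kappa)\in V^h$ is defined nodally by $\mathfrak K^m(\kappa)(q_j)=\frac{\vec\omega^m(q_j)\cdot\vec e_1}{\vec X^m(q_j)\cdot\vec e_1}$ if $q_j\in\overline I\setminus\partial_0I$ and $\mathfrak K^m(\kappa)(q_j)=-\kappa(q_j)$ if $q_j\in\partial_0I$. *)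

theory Defs
  imports "HOL-Analysis.Analysis"
begin

text \<open>Finite element functions in V^h are represented by their nodal values
 v 0, ..., v J (node q_j = j/J); values beyond J are normalised to 0.
 per = True means the periodic interval R/Z (then v J = v 0).\<close>

definition e1 :: "real \<times> real" where "e1 = (1, 0)"
definition e2 :: "real \<times> real" where "e2 = (0, 1)"
definition perp :: "real \<times> real \<Rightarrow> real \<times> real" where "perp v = (snd v, - fst v)"

definition FE :: "bool \<Rightarrow> nat \<Rightarrow> (nat \<Rightarrow> 'a::zero) set" where
  "FE per J = {v. (\<forall>k>J. v k = 0) \<and> (per \<longrightarrow> v J = v 0)}"

text \<open>boundary points p in {0,1} (index p) correspond to node p*J\<close>
definition bnode :: "nat \<Rightarrow> nat set \<Rightarrow> nat \<Rightarrow> bool" where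
  "bnode J S k = (\<exists>p\<in>S. k = p * J)"

definition Vh_d0 :: "bool \<Rightarrow> nat \<Rightarrow> nat set \<Rightarrow> (nat \<Rightarrow> real \<times> real) set" where
  "Vh_d0 per J d0 = {\<eta> \<in> FE per J. \<forall>p\<in>d0. \<eta> (p * J) \<bullet> e1 = 0}"

definition Vh_dd :: "bool \<Rightarrow> nat \<Rightarrow> nat set \<Rightarrow> nat set \<Rightarrow> nat set \<Rightarrow> nat set
    \<Rightarrow> (nat \<Rightarrow> real \<times> real) set" where
  "Vh_dd per J dD d0 d1 d2 = {\<eta> \<in> Vh_d0 per J d0.
      (\<forall>p\<in>d1. \<eta> (p * J) \<bullet> e1 = 0) \<and> (\<forall>p\<in>d2. \<eta> (p * J) \<bullet> e2 = 0) \<and>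
      (\<forall>p\<in>dD. \<eta> (p * J) = 0)}"

text \<open>piecewise affine interpolant on [0,1] and piecewise constant functions
  (c j is the value on the element (q_{j-1}, q_j))\<close>
definition interp :: "nat \<Rightarrow> (nat \<Rightarrow> 'a::real_vector) \<Rightarrow> real \<Rightarrow> 'a" where
  "interp J v s = (let j = nat \<lceil>s * real J\<rceil> in
     if j = 0 then v 0 else v (j - 1) + (s * real J - real (j - 1)) *\<^sub>R (v j - v (j - 1)))"

definition pw :: "nat \<Rightarrow> (nat \<Rightarrow> 'a) \<Rightarrow> real \<Rightarrow> 'a" where
  "pw J c s = c (nat \<lceil>s * real J\<rceil>)"

definition Xrho :: "nat \<Rightarrow> (nat \<Rightarrow> real \<times> real) \<Rightarrow> nat \<Rightarrow> real \<times> real" where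
  "Xrho J X j = real J *\<^sub>R (X j - X (j - 1))"

definition lenX :: "nat \<Rightarrow> (nat \<Rightarrow> real \<times> real) \<Rightarrow> nat \<Rightarrow> real" where
  "lenX J X j = norm (Xrho J X j)"

definition nu :: "nat \<Rightarrow> (nat \<Rightarrow> real \<times> real) \<Rightarrow> nat \<Rightarrow> real \<times> real" where
  "nu J X j = (- 1 / lenX J X j) *\<^sub>R perp (Xrho J X j)"

text \<open>mass-lumped product: F j k is the value of the (piecewise continuous) integrand,
  restricted to element j = (q_{j-1}, q_j), at the node q_k (k = j-1 or k = j).
  (f,g)^h = h/2 * sum_j [(fg)(q_j^-) + (fg)(q_{j-1}^+)], h = 1/J.\<close>
definition lump :: "nat \<Rightarrow> (nat \<Rightarrow> nat \<Rightarrow> 'a::real_vector) \<Rightarrow> 'a" where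
  "lump J F = ((1 / real J) / 2) *\<^sub>R (\<Sum>j = 1..J. F j j + F j (j - 1))"

definition omega :: "bool \<Rightarrow> nat \<Rightarrow> (nat \<Rightarrow> real \<times> real) \<Rightarrow> nat \<Rightarrow> real \<times> real" where
  "omega per J X = (THE w. w \<in> FE per J \<and>
     (\<forall>\<phi> \<in> FE per J. lump J (\<lambda>j k. (w k \<bullet> \<phi> k) * lenX J X j)
        = integral {0..1} (\<lambda>s. (pw J (nu J X) s \<bullet> interp J \<phi> s) * pw J (lenX J X) s)))"

definition Kop :: "bool \<Rightarrow> nat \<Rightarrow> nat set \<Rightarrow> (nat \<Rightarrow> real \<times> real) \<Rightarrow> (nat \<Rightarrow> real)
    \<Rightarrow> nat \<Rightarrow> real" where
  "Kop per J d0 X \<kappa> k = (if J < k then 0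
      else if bnode J d0 k then - \<kappa> k
      else (omega per J X k \<bullet> e1) / (X k \<bullet> e1))"

definition Gm :: "bool \<Rightarrow> nat \<Rightarrow> nat set \<Rightarrow> (real \<Rightarrow> real) \<Rightarrow> (nat \<Rightarrow> real \<times> real)
    \<Rightarrow> (nat \<Rightarrow> real) \<Rightarrow> real" where
  "Gm per J d0 f X \<kappa> =
     lump J (\<lambda>j k. (X k \<bullet> e1) * f (\<kappa> k - Kop per J d0 X \<kappa> k) * lenX J X j)
     / integral {0..1} (\<lambda>s. (interp J X s \<bullet> e1) * pw J (lenX J X) s)"

definition is_solution :: "bool \<Rightarrow> nat \<Rightarrow> nat set \<Rightarrow> nat set \<Rightarrow> nat set \<Rightarrow> nat set
   \<Rightarrow> (nat \<Rightarrow> real) \<Rightarrow> ereal \<Rightarrow> ereal \<Rightarrow> (real \<Rightarrow> real) \<Rightarrow> real \<Rightarrow> real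
   \<Rightarrow> (nat \<Rightarrow> real \<times> real) \<Rightarrow> (nat \<Rightarrow> real)
   \<Rightarrow> (nat \<Rightarrow> real \<times> real) \<Rightarrow> (nat \<Rightarrow> real) \<Rightarrow> bool" where
  "is_solution per J dD d0 d1 d2 \<rho> a b f \<theta> \<Delta>t X \<kappa>m \<delta>X \<kappa> =
    (let Xn = (\<lambda>k. X k + \<delta>X k);
         K = Kop per J d0 X \<kappa>;
         G = Gm per J d0 f X \<kappa>m in
     \<delta>X \<in> Vh_dd per J dD d0 d1 d2 \<and> \<kappa> \<in> FE per J \<and>
     (\<forall>k\<le>J. a < ereal (\<kappa> k - K k) \<and> ereal (\<kappa> k - K k) < b) \<and>
     (\<forall>\<psi> \<in> FE per J.
        lump J (\<lambda>j k. (((1 / \<Delta>t) *\<^sub>R (Xn k - X k)) \<bullet> nu J X j) * \<psi> k * lenX J X j)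
        = lump J (\<lambda>j k. f (\<kappa> k - K k) * \<psi> k * lenX J X j)
          - \<theta> * G * lump J (\<lambda>j k. \<psi> k * lenX J X j)) \<and>
     (\<forall>\<eta> \<in> Vh_dd per J dD d0 d1 d2.
        lump J (\<lambda>j k. \<kappa> k * (nu J X j \<bullet> \<eta> k) * lenX J X j)
        + integral {0..1} (\<lambda>s. (pw J (Xrho J Xn) s \<bullet> pw J (Xrho J \<eta>) s) / pw J (lenX J X) s)
        = - (\<Sum>p\<in>d1. \<rho> p * (\<eta> (p * J) \<bullet> e2)) - (\<Sum>p\<in>d2. \<rho> p * (\<eta> (p * J) \<bullet> e1))))"

end

(*
  Uniqueness is an energy argument.  Testing the difference of two solutions with
  (kappa1 - kappa2, dX1 - dX2) gives
    dt ((f(u1) - f(u2)) (kappa1 - kappa2), |X_rho|)^h + (d_rho, d_rho / |X_rho|) = 0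
  with u = kappa - K(kappa) and d = dX1 - dX2, a sum of two nonnegative terms.  Strict
  monotonicity of f forces kappa1 = kappa2, the second term forces d to be constant, and then
  the first equation makes this constant orthogonal to the spanning set of assumption (B)^h.

  For existence f is an increasing homeomorphism of R.  Tested with the nodal basis, the first
  equation determines kappa at each degree of freedom as a continuous increasing function of dX.
  After this substitution the second equation is the Euler-Lagrange equation of an energy: a
  sum of primitives of these functions, plus the stiffness quadratic form, minus the boundary
  load.  The primitives grow superlinearly, which together with (B)^h makes the energy coercive,
  so it attains its minimum on the closed space V^h_partial.
*)

theory Submission
  imports Defs
begin

section \<open>Spanning families\<close>

lemma span_orthogonal_eq_0:
  assumes "span S = UNIV" "\<And>v. v \<in> S \<Longrightarrow> c \<bullet> v = 0"
  shows "c = 0"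
  using orthogonal_to_span[of c S c] assms by (simp add: orthogonal_def)

lemma norm_le_sum_abs_inner:
  fixes m :: "'i \<Rightarrow> 'a::euclidean_space"
  assumes N: "finite N" and span: "span (m ` N) = UNIV"
  shows "\<exists>\<mu>>0. \<forall>v. \<mu> * norm v \<le> (\<Sum>k\<in>N. \<bar>v \<bullet> m k\<bar>)"
proof -
  define p where "p v = (\<Sum>k\<in>N. \<bar>v \<bullet> m k\<bar>)" for v
  have p_nonneg: "0 \<le> p v" for v
    unfolding p_def by (intro sum_nonneg) auto
  have p_scale: "p (c *\<^sub>R v) = \<bar>c\<bar> * p v" for c v
    unfolding p_def by (simp add: sum_distrib_left abs_mult)
  have "continuous_on (sphere 0 1) p"
    unfolding p_def by (intro continuous_intros)
  moreover have "sphere (0::'a) 1 \<noteq> {}"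
    by simp
  ultimately obtain v0 where v0: "v0 \<in> sphere 0 1" and v0_min: "\<And>v. v \<in> sphere 0 1 \<Longrightarrow> p v0 \<le> p v"
    using continuous_attains_inf[OF compact_sphere] by blast
  have "p v0 > 0"
  proof (rule ccontr)
    assume "\<not> p v0 > 0"
    then have "p v0 = 0"
      using p_nonneg[of v0] by simp
    then have "\<forall>k\<in>N. \<bar>v0 \<bullet> m k\<bar> = 0"
      unfolding p_def using N by (subst (asm) sum_nonneg_eq_0_iff) auto
    then have "v0 = 0"
      using span_orthogonal_eq_0[OF span] by auto
    then show False
      using v0 by simp
  qed
  moreover have "p v0 * norm v \<le> p v" for v
  proof (cases "v = 0")
    case False
    have "p v0 \<le> p ((1 / norm v) *\<^sub>R v)"
      using False by (intro v0_min) simp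
    also have "\<dots> = p v / norm v"
      using p_scale[of "1 / norm v" v] by simp
    finally show ?thesis
      using False by (simp add: field_simps)
  qed (simp add: p_def)
  ultimately show ?thesis
    unfolding p_def by (auto simp: mult.commute)
qed

section \<open>Lumped products and the reformulated scheme\<close>

lemma lump_cong:
  assumes "\<And>j k. j \<in> {1..J} \<Longrightarrow> k \<le> J \<Longrightarrow> F j k = G j k"
  shows "lump J F = lump J G"
  unfolding lump_def using assms by (auto intro!: sum.cong arg_cong2[where f = scaleR])

lemma lump_add: "lump J (\<lambda>j k. F j k + G j k) = lump J F + lump J G"
  unfolding lump_def by (simp add: sum.distrib[symmetric] scaleR_add_right[symmetric] add_ac)

lemma lump_diff: "lump J (\<lambda>j k. F j k - G j k) = lump J F - lump J G"
  unfolding lump_def by (simp add: sum_subtractf[symmetric] scaleR_diff_right[symmetric] algebra_simps)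

lemma lump_scaleR: "lump J (\<lambda>j k. c *\<^sub>R F j k) = c *\<^sub>R lump J F"
  unfolding lump_def by (simp add: scaleR_sum_right scaleR_add_right)

lemma lump_mult_left: "lump J (\<lambda>j k. c * F j k) = c * (lump J F :: real)"
  using lump_scaleR[of J c F] by simp

lemma lump_zero: "lump J (\<lambda>j k. 0) = 0"
  by (simp add: lump_def)

lemma lump_sum: "finite S \<Longrightarrow> lump J (\<lambda>j k. \<Sum>i\<in>S. F i j k) = (\<Sum>i\<in>S. lump J (F i))"
  by (induction S rule: finite_induct) (simp_all add: lump_add lump_zero)

lemma inner_lump: "v \<bullet> lump J F = lump J (\<lambda>j k. v \<bullet> F j k)"
  unfolding lump_def by (simp add: inner_sum_right inner_add_right)

lemma lump_nonneg:
  assumes "\<And>j k. j \<in> {1..J} \<Longrightarrow> k \<le> J \<Longrightarrow> 0 \<le> (F j k :: real)"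
  shows "0 \<le> lump J F"
  unfolding lump_def using assms by (auto intro!: sum_nonneg add_nonneg_nonneg divide_nonneg_nonneg)

lemma lump_weighted_eq_0_imp:
  fixes t l :: "nat \<Rightarrow> real"
  assumes J: "J > 0" and l: "\<forall>j\<in>{1..J}. l j > 0" and t: "\<forall>k\<le>J. 0 \<le> t k"
    and z: "lump J (\<lambda>j k. t k * l j) = 0" and k: "k \<le> J"
  shows "t k = 0"
proof -
  have nonneg: "0 \<le> t i * l j" if "j \<in> {1..J}" "i \<le> J" for i j
  proof -
    have "0 \<le> t i" "0 < l j"
      using l t that by auto
    then show ?thesis
      by (intro mult_nonneg_nonneg) auto
  qed
  have "(\<Sum>j = 1..J. t j * l j + t (j - 1) * l j) = 0"
    using z J by (simp add: lump_def)
  then have terms: "\<forall>j\<in>{1..J}. t j * l j + t (j - 1) * l j = 0"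
    using nonneg by (subst (asm) sum_nonneg_eq_0_iff) (auto intro: add_nonneg_nonneg)
  define j where "j = max 1 k"
  have j: "j \<in> {1..J}" and kj: "k = j \<or> k = j - 1"
    using J k by (auto simp: j_def)
  have "t j * l j + t (j - 1) * l j = 0"
    using terms j by blast
  moreover have "0 \<le> t j * l j" "0 \<le> t (j - 1) * l j"
    using nonneg j by auto
  ultimately have "t j * l j = 0" "t (j - 1) * l j = 0"
    by linarith+
  then have "t k * l j = 0"
    using kj by auto
  moreover have "l j > 0"
    using l j by blast
  ultimately show ?thesis
    by simp
qed

lemma has_integral_pw_prefix:
  fixes c :: "nat \<Rightarrow> real"
  assumes J: "J > 0"
  shows "n \<le> J \<Longrightarrow> (pw J c has_integral (\<Sum>j = 1..n. c j) / real J) {0..real n / real J}"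
proof (induction n)
  case 0
  then show ?case
    using has_integral_refl(1)[of "pw J c" "0::real"] by simp
next
  case (Suc n)
  let ?a = "real n / real J" and ?b = "real (Suc n) / real J"
  have const: "((\<lambda>s. c (Suc n)) has_integral c (Suc n) / real J) {?a..?b}"
    using has_integral_const_real[of "c (Suc n)" ?a ?b] J
    by (simp add: divide_right_mono diff_divide_distrib[symmetric])
  have last: "(pw J c has_integral c (Suc n) / real J) {?a..?b}"
  proof (rule has_integral_spike_finite[OF _ _ const, where S = "{?a}"])
    fix s assume "s \<in> {?a..?b} - {?a}"
    then have "real n < s * real J" "s * real J \<le> 1 + real n"
      using J by (auto simp: field_simps)
    then have "\<lceil>s * real J\<rceil> = int (Suc n)"
      by (intro ceiling_unique) auto
    then show "pw J c s = c (Suc n)"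
      by (metis pw_def nat_int)
  qed simp
  have "(pw J c has_integral (\<Sum>j = 1..n. c j) / real J + c (Suc n) / real J) {0..?b}"
    by (rule has_integral_combine[OF _ _ Suc.IH[OF Suc_leD[OF Suc.prems]] last])
      (use J in \<open>auto simp: divide_right_mono\<close>)
  then show ?case
    by (simp add: add_divide_distrib)
qed

lemma integral_pw:
  fixes c :: "nat \<Rightarrow> real"
  assumes "J > 0"
  shows "integral {0..1} (pw J c) = (\<Sum>j = 1..J. c j) / real J"
  using has_integral_pw_prefix[OF assms order_refl, of c] assms by (simp add: integral_unique)

text \<open>\<open>stiff J X y z\<close> is the paper's \<open>(y\<^sub>\<rho>, z\<^sub>\<rho> |X\<^sup>m\<^sub>\<rho>|\<^sup>-\<^sup>1)\<close>; the integrand is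
  piecewise constant, so the integral is a finite sum.\<close>

definition stiff :: "nat \<Rightarrow> (nat \<Rightarrow> real \<times> real) \<Rightarrow> (nat \<Rightarrow> real \<times> real) \<Rightarrow> (nat \<Rightarrow> real \<times> real) \<Rightarrow> real"
  where "stiff J X y z = (\<Sum>j = 1..J. (Xrho J y j \<bullet> Xrho J z j) / lenX J X j) / real J"

definition bdry_load :: "nat \<Rightarrow> nat set \<Rightarrow> nat set \<Rightarrow> (nat \<Rightarrow> real) \<Rightarrow> (nat \<Rightarrow> real \<times> real) \<Rightarrow> real"
  where "bdry_load J d1 d2 \<rho> \<eta> =
    - (\<Sum>p\<in>d1. \<rho> p * (\<eta> (p * J) \<bullet> e2)) - (\<Sum>p\<in>d2. \<rho> p * (\<eta> (p * J) \<bullet> e1))"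

lemma is_solution_iff:
  assumes "J > 0"
  shows "is_solution per J dD d0 d1 d2 \<rho> a b f \<theta> \<Delta>t X \<kappa>m \<delta>X \<kappa> \<longleftrightarrow>
    \<delta>X \<in> Vh_dd per J dD d0 d1 d2 \<and> \<kappa> \<in> FE per J \<and>
    (\<forall>k\<le>J. a < ereal (\<kappa> k - Kop per J d0 X \<kappa> k) \<and> ereal (\<kappa> k - Kop per J d0 X \<kappa> k) < b) \<and>
    (\<forall>\<psi>\<in>FE per J. lump J (\<lambda>j k. ((\<delta>X k \<bullet> nu J X j) / \<Delta>t) * \<psi> k * lenX J X j)
        = lump J (\<lambda>j k. f (\<kappa> k - Kop per J d0 X \<kappa> k) * \<psi> k * lenX J X j)
          - \<theta> * Gm per J d0 f X \<kappa>m * lump J (\<lambda>j k. \<psi> k * lenX J X j)) \<and>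
    (\<forall>\<eta>\<in>Vh_dd per J dD d0 d1 d2.
        lump J (\<lambda>j k. \<kappa> k * (nu J X j \<bullet> \<eta> k) * lenX J X j) + stiff J X (\<lambda>k. X k + \<delta>X k) \<eta>
        = bdry_load J d1 d2 \<rho> \<eta>)"
proof -
  have stiff_eq: "integral {0..1} (\<lambda>s. (pw J (Xrho J Y) s \<bullet> pw J (Xrho J \<eta>) s) / pw J (lenX J X) s)
      = stiff J X Y \<eta>" for Y \<eta>
    using integral_pw[OF assms, of "\<lambda>j. (Xrho J Y j \<bullet> Xrho J \<eta> j) / lenX J X j"]
    unfolding stiff_def pw_def by simp
  have normal_eq: "(\<lambda>j k. (((1 / \<Delta>t) *\<^sub>R (X k + \<delta>X k - X k)) \<bullet> nu J X j) * \<psi> k * lenX J X j)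
      = (\<lambda>j k. ((\<delta>X k \<bullet> nu J X j) / \<Delta>t) * \<psi> k * lenX J X j)" for \<psi>
    by simp
  show ?thesis
    unfolding is_solution_def Let_def bdry_load_def normal_eq stiff_eq ..
qed

definition Kslope :: "nat \<Rightarrow> nat set \<Rightarrow> nat \<Rightarrow> real"
  where "Kslope J d0 k = (if bnode J d0 k then 2 else 1)"

definition Koffset :: "bool \<Rightarrow> nat \<Rightarrow> nat set \<Rightarrow> (nat \<Rightarrow> real \<times> real) \<Rightarrow> nat \<Rightarrow> real"
  where "Koffset per J d0 X k = (if bnode J d0 k then 0 else (omega per J X k \<bullet> e1) / (X k \<bullet> e1))"

text \<open>\<open>Kop\<close> depends on \<open>\<kappa>\<close> only at the nodes of \<open>\<partial>\<^sub>0I\<close>, so at every node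
  \<open>\<kappa> - Kop \<kappa>\<close> is an increasing affine function of the nodal value of \<open>\<kappa>\<close>.\<close>

lemma diff_Kop_affine:
  "k \<le> J \<Longrightarrow> \<kappa> k - Kop per J d0 X \<kappa> k = Kslope J d0 k * \<kappa> k - Koffset per J d0 X k"
  by (simp add: Kop_def Kslope_def Koffset_def)

lemma Kslope_pos: "Kslope J d0 k > 0"
  by (simp add: Kslope_def)

section \<open>Discrete function spaces and the stiffness form\<close>

lemma FE_diff: "u \<in> FE per J \<Longrightarrow> v \<in> FE per J \<Longrightarrow> (\<lambda>k. u k - v k :: 'a::ab_group_add) \<in> FE per J"
  by (auto simp: FE_def)

lemma Vh_dd_diff:
  "u \<in> Vh_dd per J dD d0 d1 d2 \<Longrightarrow> v \<in> Vh_dd per J dD d0 d1 d2 \<Longrightarrow>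
    (\<lambda>k. u k - v k) \<in> Vh_dd per J dD d0 d1 d2"
  by (simp add: Vh_dd_def Vh_d0_def FE_def inner_diff_left)

lemma Vh_dd_add_scaleR:
  "u \<in> Vh_dd per J dD d0 d1 d2 \<Longrightarrow> v \<in> Vh_dd per J dD d0 d1 d2 \<Longrightarrow>
    (\<lambda>k. u k + t *\<^sub>R v k) \<in> Vh_dd per J dD d0 d1 d2"
  by (auto simp: Vh_dd_def Vh_d0_def FE_def inner_add_left)

lemma Vh_dd_zero: "(\<lambda>k. 0) \<in> Vh_dd per J dD d0 d1 d2"
  by (auto simp: Vh_dd_def Vh_d0_def FE_def)

lemma Vh_dd_imp_FE: "u \<in> Vh_dd per J dD d0 d1 d2 \<Longrightarrow> u \<in> FE per J"
  by (auto simp: Vh_dd_def Vh_d0_def)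

lemma continuous_on_coordinate [continuous_intros]:
  "continuous_on S (\<lambda>x :: nat \<Rightarrow> 'b::topological_space. x i)"
  by (rule continuous_on_subset[OF continuous_on_product_coordinates]) auto

lemma closed_Vh_dd: "closed (Vh_dd per J dD d0 d1 d2)"
proof -
  have "Vh_dd per J dD d0 d1 d2 = {\<eta>. (\<forall>k. J < k \<longrightarrow> \<eta> k = 0) \<and> (per \<longrightarrow> \<eta> J = \<eta> 0)
      \<and> (\<forall>p. p \<in> d0 \<longrightarrow> \<eta> (p * J) \<bullet> e1 = 0) \<and> (\<forall>p. p \<in> d1 \<longrightarrow> \<eta> (p * J) \<bullet> e1 = 0)
      \<and> (\<forall>p. p \<in> d2 \<longrightarrow> \<eta> (p * J) \<bullet> e2 = 0) \<and> (\<forall>p. p \<in> dD \<longrightarrow> \<eta> (p * J) = 0)}"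
    by (auto simp: Vh_dd_def Vh_d0_def FE_def)
  also have "closed \<dots>"
    by (intro closed_Collect_conj closed_Collect_all closed_Collect_imp[OF open_Collect_const]
        closed_Collect_eq continuous_intros)
  finally show ?thesis .
qed

lemma Xrho_add_scaleR: "Xrho J (\<lambda>k. y k + t *\<^sub>R z k) j = Xrho J y j + t *\<^sub>R Xrho J z j"
  by (simp add: Xrho_def algebra_simps)

lemma stiff_commute: "stiff J X y z = stiff J X z y"
  unfolding stiff_def by (simp add: inner_commute)

lemma stiff_add_scaleR_right:
  "stiff J X y (\<lambda>k. z k + t *\<^sub>R w k) = stiff J X y z + t * stiff J X y w"
  unfolding stiff_def Xrho_add_scaleR
  by (simp add: inner_add_right sum.distrib add_divide_distrib sum_distrib_left
      sum_divide_distrib[symmetric] field_simps)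

lemma stiff_add_scaleR_left:
  "stiff J X (\<lambda>k. z k + t *\<^sub>R w k) y = stiff J X z y + t * stiff J X w y"
  using stiff_add_scaleR_right stiff_commute by metis

lemma stiff_add_left: "stiff J X (\<lambda>k. z k + w k) y = stiff J X z y + stiff J X w y"
  using stiff_add_scaleR_left[of J X z 1 w y] by simp

lemma stiff_diff_left: "stiff J X (\<lambda>k. z k - w k) y = stiff J X z y - stiff J X w y"
  using stiff_add_scaleR_left[of J X z "-1" w y] by simp

lemma stiff_self_nonneg:
  assumes "\<forall>j\<in>{1..J}. lenX J X j > 0"
  shows "0 \<le> stiff J X y y"
proof -
  have "0 \<le> (\<Sum>j = 1..J. (Xrho J y j \<bullet> Xrho J y j) / lenX J X j)"
    using assms by (intro sum_nonneg) (auto intro!: divide_nonneg_pos)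
  then show ?thesis
    by (simp add: stiff_def)
qed

lemma stiff_self_eq_0_imp_const:
  assumes J: "J > 0" and l: "\<forall>j\<in>{1..J}. lenX J X j > 0" and z: "stiff J X y y = 0"
  shows "k \<le> J \<Longrightarrow> y k = y 0"
proof (induction k)
  case (Suc k)
  have "(\<Sum>j = 1..J. (Xrho J y j \<bullet> Xrho J y j) / lenX J X j) = 0"
    using z J by (simp add: stiff_def)
  then have "\<forall>j\<in>{1..J}. (Xrho J y j \<bullet> Xrho J y j) / lenX J X j = 0"
    using l by (subst (asm) sum_nonneg_eq_0_iff) (auto intro!: divide_nonneg_pos)
  moreover have sk: "Suc k \<in> {1..J}"
    using Suc.prems by simp
  moreover have "lenX J X (Suc k) > 0"
    using l sk by blast
  ultimately have "Xrho J y (Suc k) = 0"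
    by fastforce
  then have "y (Suc k) = y k"
    using J by (simp add: Xrho_def)
  then show ?case
    using Suc by simp
qed simp

definition total_jump :: "nat \<Rightarrow> (nat \<Rightarrow> 'a::real_normed_vector) \<Rightarrow> real"
  where "total_jump J x = (\<Sum>j = 1..J. norm (x j - x (j - 1)))"

lemma total_jump_nonneg: "0 \<le> total_jump J x"
  unfolding total_jump_def by (auto intro: sum_nonneg)

lemma norm_diff_le_total_jump:
  assumes "a \<le> J" "b \<le> J"
  shows "norm (x a - x b) \<le> 2 * total_jump J x"
proof -
  have from0: "norm (x k - x 0) \<le> total_jump J x" if "k \<le> J" for k
  proof -
    have "norm (x k - x 0) \<le> (\<Sum>j = 1..k. norm (x j - x (j - 1)))"
    proof (induction k)
      case (Suc k)
      have "norm (x (Suc k) - x 0) \<le> norm (x (Suc k) - x k) + norm (x k - x 0)"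
        using norm_triangle_ineq[of "x (Suc k) - x k" "x k - x 0"] by simp
      also have "\<dots> \<le> norm (x (Suc k) - x k) + (\<Sum>j = 1..k. norm (x j - x (j - 1)))"
        using Suc by simp
      finally show ?case
        by (simp add: add.commute)
    qed simp
    also have "\<dots> \<le> total_jump J x"
      unfolding total_jump_def by (rule sum_mono2) (use that in auto)
    finally show ?thesis .
  qed
  have "norm (x a - x b) \<le> norm (x a - x 0) + norm (x b - x 0)"
    using norm_triangle_ineq4[of "x a - x 0" "x b - x 0"] by simp
  then show ?thesis
    using from0[OF assms(1)] from0[OF assms(2)] by simp
qed

lemma stiff_cross_ge:
  assumes l: "\<forall>j\<in>{1..J}. lenX J X j > 0"
  shows "- total_jump J x \<le> stiff J X X x"
proof -
  have "- (real J * norm (x j - x (j - 1))) \<le> (Xrho J X j \<bullet> Xrho J x j) / lenX J X j" if j: "j \<in> {1..J}" for j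
  proof -
    have "\<bar>Xrho J X j \<bullet> Xrho J x j\<bar> \<le> lenX J X j * (real J * norm (x j - x (j - 1)))"
      using Cauchy_Schwarz_ineq2[of "Xrho J X j" "Xrho J x j"] by (simp add: lenX_def Xrho_def)
    then have "- (lenX J X j * (real J * norm (x j - x (j - 1)))) \<le> Xrho J X j \<bullet> Xrho J x j"
      unfolding abs_le_iff by linarith
    then show ?thesis
      using l j by (simp add: pos_le_divide_eq mult_ac)
  qed
  then have "- (real J * total_jump J x) \<le> (\<Sum>j = 1..J. (Xrho J X j \<bullet> Xrho J x j) / lenX J X j)"
    unfolding total_jump_def sum_distrib_left sum_negf[symmetric] by (rule sum_mono)
  then show ?thesis
    by (cases "J = 0") (simp_all add: stiff_def total_jump_def pos_le_divide_eq mult.commute)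
qed

lemma stiff_self_ge:
  assumes J: "J > 0" and l: "\<forall>j\<in>{1..J}. lenX J X j > 0"
  shows "total_jump J x ^ 2 / (\<Sum>j = 1..J. lenX J X j) \<le> stiff J X x x"
proof -
  define L where "L = (\<Sum>j = 1..J. lenX J X j)"
  define d where "d j = norm (x j - x (j - 1))" for j
  have L: "L > 0"
    unfolding L_def using l J by (intro sum_pos) auto
  have "total_jump J x ^ 2 / L \<le> (\<Sum>j = 1..J. d j ^ 2) * real J / L"
    using sum_squared_le_sum_of_squares[of d "{1..J}"] L
    by (intro divide_right_mono) (simp_all add: total_jump_def d_def)
  also have "\<dots> = (\<Sum>j = 1..J. d j ^ 2 * real J / L)"
    by (simp add: sum_divide_distrib sum_distrib_right)
  also have "\<dots> \<le> (\<Sum>j = 1..J. (Xrho J x j \<bullet> Xrho J x j) / lenX J X j / real J)"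
  proof (rule sum_mono)
    fix j
    assume j: "j \<in> {1..J}"
    have "lenX J X j \<le> L"
      unfolding L_def by (rule member_le_sum) (use l j in \<open>auto intro: less_imp_le\<close>)
    then have "d j ^ 2 * real J / L \<le> d j ^ 2 * real J / lenX J X j"
      using l j L by (intro divide_left_mono) auto
    moreover have "Xrho J x j \<bullet> Xrho J x j = real J ^ 2 * d j ^ 2"
      by (simp add: Xrho_def d_def power2_norm_eq_inner[symmetric] power_mult_distrib)
    ultimately show "d j ^ 2 * real J / L \<le> (Xrho J x j \<bullet> Xrho J x j) / lenX J X j / real J"
      using J by (simp add: power2_eq_square mult_ac)
  qed
  also have "\<dots> = stiff J X x x"
    by (simp add: stiff_def sum_divide_distrib)
  finally show ?thesis
    unfolding L_def .
qed

lemma bdry_load_add_scaleR: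
  "bdry_load J d1 d2 \<rho> (\<lambda>k. y k + t *\<^sub>R z k) = bdry_load J d1 d2 \<rho> y + t * bdry_load J d1 d2 \<rho> z"
  unfolding bdry_load_def by (simp add: inner_add_left sum.distrib sum_distrib_left algebra_simps)

lemma abs_bdry_load_le:
  assumes d1: "d1 \<subseteq> {0, 1}" and d2: "d2 \<subseteq> {0, 1}" and bound: "\<And>a. a \<le> J \<Longrightarrow> norm (x a) \<le> B"
  shows "\<bar>bdry_load J d1 d2 \<rho> x\<bar> \<le> ((\<Sum>p\<in>d1. \<bar>\<rho> p\<bar>) + (\<Sum>p\<in>d2. \<bar>\<rho> p\<bar>)) * B"
proof -
  have node: "\<bar>\<rho> p * (x (p * J) \<bullet> e)\<bar> \<le> \<bar>\<rho> p\<bar> * B" if "p \<in> {0, 1}" "norm e = 1" for p e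
  proof -
    have "\<bar>x (p * J) \<bullet> e\<bar> \<le> B"
      using Cauchy_Schwarz_ineq2[of "x (p * J)" e] bound[of "p * J"] that by auto
    then show ?thesis
      unfolding abs_mult by (rule mult_left_mono) simp
  qed
  have e: "norm e1 = 1" "norm e2 = 1"
    by (simp_all add: e1_def e2_def)
  have "\<bar>bdry_load J d1 d2 \<rho> x\<bar>
      \<le> \<bar>\<Sum>p\<in>d1. \<rho> p * (x (p * J) \<bullet> e2)\<bar> + \<bar>\<Sum>p\<in>d2. \<rho> p * (x (p * J) \<bullet> e1)\<bar>"
    unfolding bdry_load_def by arith
  also have "\<dots> \<le> (\<Sum>p\<in>d1. \<bar>\<rho> p * (x (p * J) \<bullet> e2)\<bar>) + (\<Sum>p\<in>d2. \<bar>\<rho> p * (x (p * J) \<bullet> e1)\<bar>)"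
    by (intro add_mono sum_abs)
  also have "\<dots> \<le> (\<Sum>p\<in>d1. \<bar>\<rho> p\<bar> * B) + (\<Sum>p\<in>d2. \<bar>\<rho> p\<bar> * B)"
    using d1 d2 e by (intro add_mono sum_mono node) auto
  finally show ?thesis
    by (simp add: sum_distrib_right distrib_right)
qed

section \<open>Uniqueness\<close>

lemma strict_mono_on_diff_mult:
  fixes f :: "real \<Rightarrow> real"
  assumes "strict_mono_on S f" "x \<in> S" "y \<in> S"
  shows "0 \<le> (f x - f y) * (x - y)" and "(f x - f y) * (x - y) = 0 \<Longrightarrow> x = y"
proof -
  have "x < y \<Longrightarrow> f x < f y" "y < x \<Longrightarrow> f y < f x"
    using assms strict_mono_onD by metis+
  then show "0 \<le> (f x - f y) * (x - y)" "(f x - f y) * (x - y) = 0 \<Longrightarrow> x = y"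
    by (cases x y rule: linorder_cases; auto intro: mult_nonpos_nonpos)+
qed

lemma strict_mono_on_Kop_diff:
  fixes f :: "real \<Rightarrow> real"
  assumes f: "strict_mono_on S f" and k: "k \<le> J"
    and u1: "\<kappa>1 k - Kop per J d0 X \<kappa>1 k \<in> S" and u2: "\<kappa>2 k - Kop per J d0 X \<kappa>2 k \<in> S"
  defines "t \<equiv> (f (\<kappa>1 k - Kop per J d0 X \<kappa>1 k) - f (\<kappa>2 k - Kop per J d0 X \<kappa>2 k)) * (\<kappa>1 k - \<kappa>2 k)"
  shows "0 \<le> t" and "t = 0 \<Longrightarrow> \<kappa>1 k = \<kappa>2 k"
proof -
  let ?c = "Kslope J d0 k"
  have c: "?c > 0"
    by (rule Kslope_pos)
  have "(f (\<kappa>1 k - Kop per J d0 X \<kappa>1 k) - f (\<kappa>2 k - Kop per J d0 X \<kappa>2 k))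
      * ((\<kappa>1 k - Kop per J d0 X \<kappa>1 k) - (\<kappa>2 k - Kop per J d0 X \<kappa>2 k)) = ?c * t"
    unfolding t_def diff_Kop_affine[OF k] by (simp add: algebra_simps)
  note * = strict_mono_on_diff_mult[OF f u1 u2, unfolded this]
  show "0 \<le> t"
    using *(1) c by (simp add: zero_le_mult_iff)
  show "t = 0 \<Longrightarrow> \<kappa>1 k = \<kappa>2 k"
    using *(2) c unfolding diff_Kop_affine[OF k] by simp
qed

lemma solution_diff_normal_eq:
  assumes J: "J > 0" and dt: "\<Delta>t \<noteq> 0"
    and s1: "is_solution per J dD d0 d1 d2 \<rho> a b f \<theta> \<Delta>t X \<kappa>m \<delta>X1 \<kappa>1"
    and s2: "is_solution per J dD d0 d1 d2 \<rho> a b f \<theta> \<Delta>t X \<kappa>m \<delta>X2 \<kappa>2"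
    and \<psi>: "\<psi> \<in> FE per J"
  shows "lump J (\<lambda>j k. ((\<delta>X1 k - \<delta>X2 k) \<bullet> nu J X j) * \<psi> k * lenX J X j)
    = \<Delta>t * lump J (\<lambda>j k. (f (\<kappa>1 k - Kop per J d0 X \<kappa>1 k) - f (\<kappa>2 k - Kop per J d0 X \<kappa>2 k))
        * \<psi> k * lenX J X j)"
proof -
  let ?n = "nu J X" and ?l = "lenX J X"
  have e1: "lump J (\<lambda>j k. ((\<delta>X1 k \<bullet> ?n j) / \<Delta>t) * \<psi> k * ?l j)
      = lump J (\<lambda>j k. f (\<kappa>1 k - Kop per J d0 X \<kappa>1 k) * \<psi> k * ?l j)
        - \<theta> * Gm per J d0 f X \<kappa>m * lump J (\<lambda>j k. \<psi> k * ?l j)"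
    using s1 \<psi> unfolding is_solution_iff[OF J] by blast
  have e2: "lump J (\<lambda>j k. ((\<delta>X2 k \<bullet> ?n j) / \<Delta>t) * \<psi> k * ?l j)
      = lump J (\<lambda>j k. f (\<kappa>2 k - Kop per J d0 X \<kappa>2 k) * \<psi> k * ?l j)
        - \<theta> * Gm per J d0 f X \<kappa>m * lump J (\<lambda>j k. \<psi> k * ?l j)"
    using s2 \<psi> unfolding is_solution_iff[OF J] by blast
  have "lump J (\<lambda>j k. ((\<delta>X1 k - \<delta>X2 k) \<bullet> ?n j) * \<psi> k * ?l j)
      = \<Delta>t * lump J (\<lambda>j k. ((\<delta>X1 k \<bullet> ?n j) / \<Delta>t) * \<psi> k * ?l j
          - ((\<delta>X2 k \<bullet> ?n j) / \<Delta>t) * \<psi> k * ?l j)"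
    unfolding lump_mult_left[symmetric]
    by (rule lump_cong) (use dt in \<open>simp add: inner_diff_left field_simps\<close>)
  also have "\<dots> = \<Delta>t * (lump J (\<lambda>j k. f (\<kappa>1 k - Kop per J d0 X \<kappa>1 k) * \<psi> k * ?l j)
      - lump J (\<lambda>j k. f (\<kappa>2 k - Kop per J d0 X \<kappa>2 k) * \<psi> k * ?l j))"
    unfolding lump_diff e1 e2 by simp
  also have "\<dots> = \<Delta>t * lump J (\<lambda>j k. (f (\<kappa>1 k - Kop per J d0 X \<kappa>1 k) - f (\<kappa>2 k - Kop per J d0 X \<kappa>2 k))
        * \<psi> k * ?l j)"
    unfolding lump_diff[symmetric] by (simp add: left_diff_distrib)
  finally show ?thesis .
qed

lemma solution_diff_curvature_eq:
  assumes J: "J > 0"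
    and s1: "is_solution per J dD d0 d1 d2 \<rho> a b f \<theta> \<Delta>t X \<kappa>m \<delta>X1 \<kappa>1"
    and s2: "is_solution per J dD d0 d1 d2 \<rho> a b f \<theta> \<Delta>t X \<kappa>m \<delta>X2 \<kappa>2"
    and \<eta>: "\<eta> \<in> Vh_dd per J dD d0 d1 d2"
  shows "lump J (\<lambda>j k. (\<kappa>1 k - \<kappa>2 k) * (nu J X j \<bullet> \<eta> k) * lenX J X j)
    + stiff J X (\<lambda>k. \<delta>X1 k - \<delta>X2 k) \<eta> = 0"
proof -
  have e1: "lump J (\<lambda>j k. \<kappa>1 k * (nu J X j \<bullet> \<eta> k) * lenX J X j) + stiff J X (\<lambda>k. X k + \<delta>X1 k) \<eta>
      = bdry_load J d1 d2 \<rho> \<eta>"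
    using s1 \<eta> unfolding is_solution_iff[OF J] by blast
  have e2: "lump J (\<lambda>j k. \<kappa>2 k * (nu J X j \<bullet> \<eta> k) * lenX J X j) + stiff J X (\<lambda>k. X k + \<delta>X2 k) \<eta>
      = bdry_load J d1 d2 \<rho> \<eta>"
    using s2 \<eta> unfolding is_solution_iff[OF J] by blast
  have "stiff J X (\<lambda>k. \<delta>X1 k - \<delta>X2 k) \<eta> = stiff J X (\<lambda>k. X k + \<delta>X1 k) \<eta> - stiff J X (\<lambda>k. X k + \<delta>X2 k) \<eta>"
    using stiff_diff_left[of J X "\<lambda>k. X k + \<delta>X1 k" "\<lambda>k. X k + \<delta>X2 k" \<eta>] by simp
  moreover have "lump J (\<lambda>j k. (\<kappa>1 k - \<kappa>2 k) * (nu J X j \<bullet> \<eta> k) * lenX J X j)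
      = lump J (\<lambda>j k. \<kappa>1 k * (nu J X j \<bullet> \<eta> k) * lenX J X j)
        - lump J (\<lambda>j k. \<kappa>2 k * (nu J X j \<bullet> \<eta> k) * lenX J X j)"
    unfolding lump_diff[symmetric] by (simp add: algebra_simps)
  ultimately show ?thesis
    using e1 e2 by simp
qed

lemma solution_diff_energy_eq:
  assumes J: "J > 0" and dt: "\<Delta>t \<noteq> 0"
    and s1: "is_solution per J dD d0 d1 d2 \<rho> a b f \<theta> \<Delta>t X \<kappa>m \<delta>X1 \<kappa>1"
    and s2: "is_solution per J dD d0 d1 d2 \<rho> a b f \<theta> \<Delta>t X \<kappa>m \<delta>X2 \<kappa>2"
  shows "\<Delta>t * lump J (\<lambda>j k. (f (\<kappa>1 k - Kop per J d0 X \<kappa>1 k) - f (\<kappa>2 k - Kop per J d0 X \<kappa>2 k))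
      * (\<kappa>1 k - \<kappa>2 k) * lenX J X j)
    + stiff J X (\<lambda>k. \<delta>X1 k - \<delta>X2 k) (\<lambda>k. \<delta>X1 k - \<delta>X2 k) = 0"
proof -
  let ?\<delta> = "\<lambda>k. \<delta>X1 k - \<delta>X2 k" and ?\<kappa> = "\<lambda>k. \<kappa>1 k - \<kappa>2 k"
  have "\<delta>X1 \<in> Vh_dd per J dD d0 d1 d2" "\<kappa>1 \<in> FE per J" "\<delta>X2 \<in> Vh_dd per J dD d0 d1 d2" "\<kappa>2 \<in> FE per J"
    using s1 s2 unfolding is_solution_iff[OF J] by blast+
  then have "?\<delta> \<in> Vh_dd per J dD d0 d1 d2" "?\<kappa> \<in> FE per J"
    by (simp_all add: Vh_dd_diff FE_diff)
  note curvature = solution_diff_curvature_eq[OF J s1 s2 this(1)]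
    and normal = solution_diff_normal_eq[OF J dt s1 s2 this(2)]
  have "lump J (\<lambda>j k. ?\<kappa> k * (nu J X j \<bullet> ?\<delta> k) * lenX J X j)
      = lump J (\<lambda>j k. (?\<delta> k \<bullet> nu J X j) * ?\<kappa> k * lenX J X j)"
    by (rule lump_cong) (simp add: inner_commute)
  with curvature normal show ?thesis
    by simp
qed

lemma solution_same_curvature_const_diff_eq_0:
  assumes J: "J > 0" and dt: "\<Delta>t \<noteq> 0"
    and B: "span {lump J (\<lambda>j k. (\<psi> k * lenX J X j) *\<^sub>R nu J X j) | \<psi>. \<psi> \<in> FE per J} = UNIV"
    and s1: "is_solution per J dD d0 d1 d2 \<rho> a b f \<theta> \<Delta>t X \<kappa>m \<delta>X1 \<kappa>"
    and s2: "is_solution per J dD d0 d1 d2 \<rho> a b f \<theta> \<Delta>t X \<kappa>m \<delta>X2 \<kappa>"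
    and const: "\<And>k. k \<le> J \<Longrightarrow> \<delta>X1 k - \<delta>X2 k = c"
  shows "c = 0"
proof (rule span_orthogonal_eq_0[OF B])
  fix v
  assume "v \<in> {lump J (\<lambda>j k. (\<psi> k * lenX J X j) *\<^sub>R nu J X j) | \<psi>. \<psi> \<in> FE per J}"
  then obtain \<psi> where \<psi>: "\<psi> \<in> FE per J" and v: "v = lump J (\<lambda>j k. (\<psi> k * lenX J X j) *\<^sub>R nu J X j)"
    by blast
  have "c \<bullet> v = lump J (\<lambda>j k. ((\<delta>X1 k - \<delta>X2 k) \<bullet> nu J X j) * \<psi> k * lenX J X j)"
    unfolding v inner_lump by (rule lump_cong) (simp add: const)
  also have "\<dots> = 0"
    using solution_diff_normal_eq[OF J dt s1 s2 \<psi>] by (simp add: lump_zero)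
  finally show "c \<bullet> v = 0" .
qed

lemma is_solution_unique:
  assumes J: "J > 0"
    and f: "strict_mono_on {x. a < ereal x \<and> ereal x < b} f"
    and l: "\<forall>j\<in>{1..J}. lenX J X j > 0"
    and B: "span {lump J (\<lambda>j k. (\<psi> k * lenX J X j) *\<^sub>R nu J X j) | \<psi>. \<psi> \<in> FE per J} = UNIV"
    and dt: "\<Delta>t > 0"
    and s1: "is_solution per J dD d0 d1 d2 \<rho> a b f \<theta> \<Delta>t X \<kappa>m \<delta>X1 \<kappa>1"
    and s2: "is_solution per J dD d0 d1 d2 \<rho> a b f \<theta> \<Delta>t X \<kappa>m \<delta>X2 \<kappa>2"
  shows "\<delta>X1 = \<delta>X2 \<and> \<kappa>1 = \<kappa>2"
proof -
  define t where "t k = (f (\<kappa>1 k - Kop per J d0 X \<kappa>1 k) - f (\<kappa>2 k - Kop per J d0 X \<kappa>2 k))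
    * (\<kappa>1 k - \<kappa>2 k)" for k
  have V1: "\<delta>X1 \<in> Vh_dd per J dD d0 d1 d2" and FE1: "\<kappa>1 \<in> FE per J"
    and dom1: "\<forall>k\<le>J. \<kappa>1 k - Kop per J d0 X \<kappa>1 k \<in> {x. a < ereal x \<and> ereal x < b}"
    using s1 unfolding is_solution_iff[OF J] by auto
  have V2: "\<delta>X2 \<in> Vh_dd per J dD d0 d1 d2" and FE2: "\<kappa>2 \<in> FE per J"
    and dom2: "\<forall>k\<le>J. \<kappa>2 k - Kop per J d0 X \<kappa>2 k \<in> {x. a < ereal x \<and> ereal x < b}"
    using s2 unfolding is_solution_iff[OF J] by auto
  have t_nonneg: "0 \<le> t k" if "k \<le> J" for k
    unfolding t_def using dom1 dom2 that by (intro strict_mono_on_Kop_diff(1)[OF f that]) auto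
  have "0 \<le> \<Delta>t * lump J (\<lambda>j k. t k * lenX J X j)"
    using t_nonneg l dt by (intro mult_nonneg_nonneg lump_nonneg) (auto simp: less_imp_le)
  moreover have "0 \<le> stiff J X (\<lambda>k. \<delta>X1 k - \<delta>X2 k) (\<lambda>k. \<delta>X1 k - \<delta>X2 k)"
    by (rule stiff_self_nonneg[OF l])
  ultimately have "\<Delta>t * lump J (\<lambda>j k. t k * lenX J X j) = 0"
    and stiff0: "stiff J X (\<lambda>k. \<delta>X1 k - \<delta>X2 k) (\<lambda>k. \<delta>X1 k - \<delta>X2 k) = 0"
    using solution_diff_energy_eq[OF J _ s1 s2] dt unfolding t_def by linarith+
  then have t0: "lump J (\<lambda>j k. t k * lenX J X j) = 0"
    using dt by simp
  have \<kappa>_eq: "\<kappa>1 = \<kappa>2"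
  proof
    fix k
    show "\<kappa>1 k = \<kappa>2 k"
    proof (cases "k \<le> J")
      case True
      then have "t k = 0"
        using lump_weighted_eq_0_imp[OF J l _ t0] t_nonneg by blast
      then show ?thesis
        using strict_mono_on_Kop_diff(2)[OF f True] dom1 dom2 True unfolding t_def by blast
    next
      case False
      then show ?thesis
        using FE1 FE2 by (simp add: FE_def)
    qed
  qed
  have const: "\<delta>X1 k - \<delta>X2 k = \<delta>X1 0 - \<delta>X2 0" if "k \<le> J" for k
    using stiff_self_eq_0_imp_const[OF J l stiff0 that] .
  have "\<delta>X1 0 - \<delta>X2 0 = 0"
    using dt by (intro solution_same_curvature_const_diff_eq_0[OF J _ B s1 s2[folded \<kappa>_eq] const]) simp_all
  have "\<delta>X1 k = \<delta>X2 k" for k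
  proof (cases "k \<le> J")
    case True
    then show ?thesis
      using const[OF True] \<open>\<delta>X1 0 - \<delta>X2 0 = 0\<close> by simp
  next
    case False
    then show ?thesis
      using Vh_dd_imp_FE[OF V1] Vh_dd_imp_FE[OF V2] by (simp add: FE_def)
  qed
  then have "\<delta>X1 = \<delta>X2"
    by blast
  with \<kappa>_eq show ?thesis
    by simp
qed

section \<open>Unbounded increasing functions and primitives of their inverses\<close>

definition mono_continuous :: "(real \<Rightarrow> real) \<Rightarrow> bool"
  where "mono_continuous g \<longleftrightarrow> continuous_on UNIV g \<and> mono g"

definition increasing_unbounded :: "(real \<Rightarrow> real) \<Rightarrow> bool"
  where "increasing_unbounded g \<longleftrightarrow>
    continuous_on UNIV g \<and> strict_mono g \<and> (\<forall>y. \<exists>s. y \<le> g s) \<and> (\<forall>y. \<exists>s. g s \<le> y)"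

lemma increasing_unbounded_imp_mono_continuous: "increasing_unbounded g \<Longrightarrow> mono_continuous g"
  unfolding increasing_unbounded_def mono_continuous_def by (auto intro: strict_mono_mono)

lemma mono_continuous_add: "mono_continuous g \<Longrightarrow> mono_continuous h \<Longrightarrow> mono_continuous (\<lambda>s. g s + h s)"
  unfolding mono_continuous_def by (auto intro!: continuous_intros simp: mono_def add_mono)

lemma mono_continuous_mult_left: "c \<ge> 0 \<Longrightarrow> mono_continuous g \<Longrightarrow> mono_continuous (\<lambda>s. c * g s)"
  unfolding mono_continuous_def by (auto intro!: continuous_intros simp: mono_def mult_left_mono)

lemma mono_continuous_sum:
  "(\<And>i. i \<in> S \<Longrightarrow> mono_continuous (g i)) \<Longrightarrow> mono_continuous (\<lambda>s. \<Sum>i\<in>S. g i s)"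
proof (induction S rule: infinite_finite_induct)
  case (insert x F)
  then show ?case
    by (simp add: mono_continuous_add)
qed (auto simp: mono_continuous_def mono_def)

lemma increasing_unbounded_mult_left:
  assumes c: "c > 0" and g: "increasing_unbounded g"
  shows "increasing_unbounded (\<lambda>s. c * g s)"
  unfolding increasing_unbounded_def
proof (intro conjI allI)
  show "continuous_on UNIV (\<lambda>s. c * g s)" "strict_mono (\<lambda>s. c * g s)"
    using g c by (auto intro!: continuous_intros simp: increasing_unbounded_def strict_mono_def)
  fix y
  obtain s s' where "y / c \<le> g s" "g s' \<le> y / c"
    using g unfolding increasing_unbounded_def by blast
  then show "\<exists>s. y \<le> c * g s" "\<exists>s. c * g s \<le> y"
    using c by (auto simp: field_simps)
qed

lemma increasing_unbounded_add:
  assumes g: "increasing_unbounded g" and h: "mono_continuous h"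
  shows "increasing_unbounded (\<lambda>s. g s + h s)"
  unfolding increasing_unbounded_def
proof (intro conjI allI)
  have gm: "strict_mono g" and hm: "mono h"
    using g h by (auto simp: increasing_unbounded_def mono_continuous_def)
  show "continuous_on UNIV (\<lambda>s. g s + h s)"
    using g h by (auto intro!: continuous_intros simp: increasing_unbounded_def mono_continuous_def)
  show "strict_mono (\<lambda>s. g s + h s)"
    using gm hm by (auto simp: strict_mono_def mono_def intro: add_less_le_mono)
  fix y
  obtain s s' where s: "y - h 0 \<le> g s" and s': "g s' \<le> y - h 0"
    using g unfolding increasing_unbounded_def by blast
  have "g s \<le> g (max s 0)" "h 0 \<le> h (max s 0)" "g (min s' 0) \<le> g s'" "h (min s' 0) \<le> h 0"
    using strict_mono_mono[OF gm] hm by (auto simp: mono_def)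
  then show "\<exists>s. y \<le> g s + h s" "\<exists>s. g s + h s \<le> y"
    using s s' by (auto intro: exI[of _ "max s 0"] exI[of _ "min s' 0"])
qed

lemma increasing_unbounded_sum:
  assumes "finite S" "i0 \<in> S" "increasing_unbounded (g i0)" "\<And>i. i \<in> S \<Longrightarrow> mono_continuous (g i)"
  shows "increasing_unbounded (\<lambda>s. \<Sum>i\<in>S. g i s)"
proof -
  have "(\<lambda>s. \<Sum>i\<in>S. g i s) = (\<lambda>s. g i0 s + (\<Sum>i\<in>S - {i0}. g i s))"
    using assms by (auto simp: sum.remove)
  moreover have "increasing_unbounded (\<lambda>s. g i0 s + (\<Sum>i\<in>S - {i0}. g i s))"
    using assms by (intro increasing_unbounded_add mono_continuous_sum) auto
  ultimately show ?thesis
    by simp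
qed

lemma increasing_unbounded_affine_comp:
  fixes f :: "real \<Rightarrow> real"
  assumes fc: "continuous_on UNIV f" and fm: "strict_mono f" and fs: "surj f" and c: "c > 0"
  shows "increasing_unbounded (\<lambda>s. f (c * s - K) - G)"
  unfolding increasing_unbounded_def
proof (intro conjI allI)
  show "continuous_on UNIV (\<lambda>s. f (c * s - K) - G)"
    by (intro continuous_intros continuous_on_compose2[OF fc]) auto
  show "strict_mono (\<lambda>s. f (c * s - K) - G)"
    using fm c by (auto simp: strict_mono_def)
  fix y
  obtain z where z: "f z = y + G"
    using fs by (metis surjD)
  have "c * ((z + K) / c) - K = z"
    using c by (simp add: field_simps)
  then show "\<exists>s. y \<le> f (c * s - K) - G" "\<exists>s. f (c * s - K) - G \<le> y"
    using z by (auto intro!: exI[of _ "(z + K) / c"])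
qed

lemma increasing_unbounded_surj:
  assumes "increasing_unbounded g"
  shows "surj g"
proof -
  have gc: "continuous_on UNIV g" and gm: "strict_mono g"
    using assms unfolding increasing_unbounded_def by auto
  have "y \<in> range g" for y
  proof -
    obtain s1 s2 where s1: "g s1 \<le> y" and s2: "y \<le> g s2"
      using assms unfolding increasing_unbounded_def by blast
    have "s1 \<le> s2"
    proof (rule ccontr)
      assume "\<not> s1 \<le> s2"
      then have "g s2 < g s1"
        using gm by (simp add: strict_monoD)
      then show False
        using s1 s2 by simp
    qed
    then obtain x where "g x = y"
      using IVT'[of g s1 y s2] s1 s2 continuous_on_subset[OF gc] by blast
    then show ?thesis
      by auto
  qed
  then show ?thesis
    by auto
qed

lemma increasing_unbounded_inv:
  assumes g: "increasing_unbounded g"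
  shows inv_increasing_unbounded_left: "inv g (g s) = s"
    and inv_increasing_unbounded_right: "g (inv g y) = y"
    and strict_mono_inv_increasing_unbounded: "strict_mono (inv g)"
    and continuous_inv_increasing_unbounded: "continuous_on UNIV (inv g)"
proof -
  have gc: "continuous_on UNIV g" and gm: "strict_mono g"
    using g unfolding increasing_unbounded_def by auto
  have inj: "inj g"
    using gm by (rule strict_mono_imp_inj_on)
  show left: "inv g (g s) = s" for s
    using inj by simp
  show right: "g (inv g y) = y" for y
    using increasing_unbounded_surj[OF g] by (simp add: surj_f_inv_f)
  show "strict_mono (inv g)"
  proof (rule strict_monoI)
    fix x y :: real
    assume "x < y"
    show "inv g x < inv g y"
    proof (rule ccontr)
      assume "\<not> inv g x < inv g y"
      then have "g (inv g y) \<le> g (inv g x)"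
        using strict_mono_mono[OF gm] by (auto simp: mono_def)
      then show False
        using \<open>x < y\<close> right by simp
    qed
  qed
  show "continuous_on UNIV (inv g)"
  proof (rule continuous_at_imp_continuous_on, intro ballI)
    fix y :: real
    have "isCont (inv g) (g (inv g y))"
      by (rule isCont_inverse_function[where d = 1])
        (use left gc in \<open>auto simp: continuous_on_eq_continuous_at\<close>)
    then show "isCont (inv g) y"
      using right by simp
  qed
qed

definition primitive :: "(real \<Rightarrow> real) \<Rightarrow> real \<Rightarrow> real"
  where "primitive h s = (LBINT t=ereal 0..ereal s. h t)"

lemma has_real_derivative_primitive:
  assumes "continuous_on UNIV h"
  shows "(primitive h has_real_derivative h x) (at x)"
proof -
  have "((\<lambda>u. LBINT t=ereal 0..ereal u. h t) has_vector_derivative h x)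
      (at x within {-(\<bar>x\<bar> + 1)..\<bar>x\<bar> + 1})"
    by (rule interval_integral_FTC2[where a = "-(\<bar>x\<bar> + 1)" and b = "\<bar>x\<bar> + 1" and c = 0])
      (auto intro: continuous_on_subset[OF assms])
  moreover have "at x within {-(\<bar>x\<bar> + 1)..\<bar>x\<bar> + 1} = at x"
    by (rule at_within_Icc_at) auto
  ultimately show ?thesis
    unfolding primitive_def has_real_derivative_iff_has_vector_derivative by simp
qed

lemma primitive_above_tangent:
  assumes "continuous_on UNIV h" "mono h"
  shows "primitive h y + h y * (s - y) \<le> primitive h s"
proof -
  have "convex_on UNIV (primitive h)"
    using assms by (intro convex_on_realI[where f' = h] has_real_derivative_primitive)
      (auto simp: mono_def)
  from convex_on_imp_above_tangent[OF this, of y s "h y"]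
  show ?thesis
    using has_real_derivative_primitive[OF assms(1)] by (simp add: algebra_simps)
qed

text \<open>The slope of \<open>primitive (inv g)\<close> at \<open>g (\<plusminus>M)\<close> is \<open>\<plusminus>M\<close>; compare with the tangents there.\<close>

lemma primitive_inv_superlinear:
  assumes "increasing_unbounded g"
  shows "\<exists>C. \<forall>s. M * \<bar>s\<bar> - C \<le> primitive (inv g) s"
proof -
  have cont: "continuous_on UNIV (inv g)" and mono: "mono (inv g)"
    using assms by (auto intro: strict_mono_mono continuous_inv_increasing_unbounded
        strict_mono_inv_increasing_unbounded)
  let ?P = "primitive (inv g)"
  have "M * \<bar>s\<bar> - max (M * g M - ?P (g M)) (- M * g (-M) - ?P (g (-M))) \<le> ?P s" for s
    using primitive_above_tangent[OF cont mono, of "g M" s]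
      primitive_above_tangent[OF cont mono, of "g (-M)" s]
    by (cases "s \<ge> 0") (auto simp: inv_increasing_unbounded_left[OF assms] algebra_simps)
  then show ?thesis
    by blast
qed

lemma increasing_unbounded_lump:
  assumes J: "J > 0" and w: "\<And>j k. j \<in> {1..J} \<Longrightarrow> k \<le> J \<Longrightarrow> 0 \<le> w j k"
    and g: "\<And>k. increasing_unbounded (g k)"
    and k0: "k0 \<le> J" and pos: "w (max 1 k0) k0 > 0"
  shows "increasing_unbounded (\<lambda>s. lump J (\<lambda>j k. w j k * g k s))"
proof -
  define j0 where "j0 = max 1 k0"
  have j0: "j0 \<in> {1..J}"
    using J k0 by (auto simp: j0_def)
  have mc: "mono_continuous (\<lambda>s. w j k * g k s)" if "j \<in> {1..J}" "k \<le> J" for j k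
    using w[OF that] g by (intro mono_continuous_mult_left increasing_unbounded_imp_mono_continuous)
  have iu: "increasing_unbounded (\<lambda>s. w j0 k0 * g k0 s)"
    using pos g unfolding j0_def by (intro increasing_unbounded_mult_left)
  have "increasing_unbounded (\<lambda>s. w j0 j0 * g j0 s + w j0 (j0 - 1) * g (j0 - 1) s)"
  proof (cases "k0 = 0")
    case True
    then have "increasing_unbounded (\<lambda>s. w j0 (j0 - 1) * g (j0 - 1) s + w j0 j0 * g j0 s)"
      using iu j0 by (intro increasing_unbounded_add mc) (auto simp: j0_def)
    then show ?thesis
      by (simp add: add.commute)
  next
    case False
    then show ?thesis
      using iu j0 by (intro increasing_unbounded_add mc) (auto simp: j0_def)
  qed
  then have "increasing_unbounded (\<lambda>s. \<Sum>j = 1..J. w j j * g j s + w j (j - 1) * g (j - 1) s)"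
    using j0 by (intro increasing_unbounded_sum mono_continuous_add mc) auto
  then have "increasing_unbounded (\<lambda>s. (1 / real J / 2) * (\<Sum>j = 1..J. w j j * g j s + w j (j - 1) * g (j - 1) s))"
    using J by (intro increasing_unbounded_mult_left) auto
  then show ?thesis
    by (simp add: lump_def)
qed

section \<open>Existence by energy minimisation\<close>

locale energy_scheme =
  fixes per :: bool and J :: nat and dD d0 d1 d2 :: "nat set" and \<rho> :: "nat \<Rightarrow> real"
    and f :: "real \<Rightarrow> real" and X :: "nat \<Rightarrow> real \<times> real" and \<Delta>t G0 :: real
  assumes J_pos: "J > 0"
    and f_cont: "continuous_on UNIV f" and f_strict_mono: "strict_mono f" and f_surj: "surj f"
    and lenX_pos: "\<forall>j\<in>{1..J}. lenX J X j > 0" and dt_pos: "\<Delta>t > 0"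
    and normals_span: "span {lump J (\<lambda>j k. (\<psi> k * lenX J X j) *\<^sub>R nu J X j) | \<psi>. \<psi> \<in> FE per J} = UNIV"
    and d1_sub: "d1 \<subseteq> {0, 1}" and d2_sub: "d2 \<subseteq> {0, 1}"
begin

text \<open>The degrees of freedom of \<open>V\<^sup>h\<close> are the nodes in \<open>dofs\<close>; node \<open>k\<close> carries the unknown
  \<open>dof k\<close>, which differs from \<open>k\<close> only for the periodic identification of node \<open>J\<close> with node \<open>0\<close>.\<close>

definition dof :: "nat \<Rightarrow> nat"
  where "dof k = (if per \<and> k = J then 0 else k)"

definition dofs :: "nat set"
  where "dofs = (if per then {0..<J} else {0..J})"

definition hat :: "nat \<Rightarrow> nat \<Rightarrow> real"
  where "hat i k = (if dof k = i then 1 else 0)"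

text \<open>\<open>wnormal i = (\<chi>\<^sub>i \<nu>\<^sup>m, |X\<^sup>m\<^sub>\<rho>|)\<^sup>h\<close> for the nodal basis function \<open>\<chi>\<^sub>i\<close>; they span the same space as
  the vectors of assumption \<open>(\<BB>)\<^sup>h\<close>.\<close>

definition wnormal :: "nat \<Rightarrow> real \<times> real"
  where "wnormal i = lump J (\<lambda>j k. (hat i k * lenX J X j) *\<^sub>R nu J X j)"

definition nodal_rhs :: "nat \<Rightarrow> real \<Rightarrow> real"
  where "nodal_rhs i s =
    lump J (\<lambda>j k. (hat i k * lenX J X j) * (f (Kslope J d0 k * s - Koffset per J d0 X k) - G0))"

definition curvature :: "(nat \<Rightarrow> real \<times> real) \<Rightarrow> nat \<Rightarrow> real"
  where "curvature x k =
    (if k \<le> J then inv (nodal_rhs (dof k)) ((x (dof k) \<bullet> wnormal (dof k)) / \<Delta>t) else 0)"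

definition energy :: "(nat \<Rightarrow> real \<times> real) \<Rightarrow> real"
  where "energy x = (\<Sum>i\<in>dofs. \<Delta>t * primitive (inv (nodal_rhs i)) ((x i \<bullet> wnormal i) / \<Delta>t))
    + stiff J X X x + stiff J X x x / 2 - bdry_load J d1 d2 \<rho> x"

lemma finite_dofs: "finite dofs"
  by (simp add: dofs_def)

lemma dof_in_dofs: "k \<le> J \<Longrightarrow> dof k \<in> dofs"
  using J_pos by (auto simp: dof_def dofs_def)

lemma dofs_le: "i \<in> dofs \<Longrightarrow> i \<le> J"
  by (auto simp: dofs_def split: if_splits)

lemma dof_dofs: "i \<in> dofs \<Longrightarrow> dof i = i"
  by (auto simp: dof_def dofs_def split: if_splits)

lemma FE_dof: "v \<in> FE per J \<Longrightarrow> v (dof k) = v k"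
  by (auto simp: dof_def FE_def)

lemma sum_hat: "k \<le> J \<Longrightarrow> (\<Sum>i\<in>dofs. c i * hat i k) = c (dof k)"
  using dof_in_dofs finite_dofs by (simp add: hat_def if_distrib sum.delta' cong: if_cong)

lemma lump_regroup:
  assumes "\<psi> \<in> FE per J"
  shows "lump J (\<lambda>j k. \<psi> k *\<^sub>R F j k) = (\<Sum>i\<in>dofs. \<psi> i *\<^sub>R lump J (\<lambda>j k. hat i k *\<^sub>R F j k))"
proof -
  have "(\<Sum>i\<in>dofs. \<psi> i *\<^sub>R lump J (\<lambda>j k. hat i k *\<^sub>R F j k))
      = lump J (\<lambda>j k. \<Sum>i\<in>dofs. (\<psi> i * hat i k) *\<^sub>R F j k)"
    by (simp add: lump_scaleR[symmetric] lump_sum[OF finite_dofs])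
  also have "\<dots> = lump J (\<lambda>j k. \<psi> k *\<^sub>R F j k)"
    by (rule lump_cong)
      (simp add: scaleR_sum_left[symmetric] sum_hat FE_dof[OF assms])
  finally show ?thesis
    by simp
qed

lemma lump_regroup_real:
  "\<psi> \<in> FE per J \<Longrightarrow> lump J (\<lambda>j k. \<psi> k * F j k) = (\<Sum>i\<in>dofs. \<psi> i * lump J (\<lambda>j k. hat i k * F j k))"
  using lump_regroup[of \<psi> F] by simp

lemma increasing_unbounded_nodal_rhs:
  assumes i: "i \<in> dofs"
  shows "increasing_unbounded (nodal_rhs i)"
  unfolding nodal_rhs_def
proof (rule increasing_unbounded_lump[OF J_pos _ _ dofs_le[OF i]])
  show "0 \<le> hat i k * lenX J X j" if "j \<in> {1..J}" for j k
    using lenX_pos that by (auto simp: hat_def less_imp_le)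
  show "0 < hat i i * lenX J X (max 1 i)"
    using lenX_pos dofs_le[OF i] J_pos by (auto simp: hat_def dof_dofs[OF i])
  show "increasing_unbounded (\<lambda>s. f (Kslope J d0 k * s - Koffset per J d0 X k) - G0)" for k
    by (rule increasing_unbounded_affine_comp[OF f_cont f_strict_mono f_surj Kslope_pos])
qed

lemma has_real_derivative_primitive_inv_nodal_rhs:
  "i \<in> dofs \<Longrightarrow> (primitive (inv (nodal_rhs i)) has_real_derivative inv (nodal_rhs i) s) (at s)"
  by (intro has_real_derivative_primitive continuous_inv_increasing_unbounded increasing_unbounded_nodal_rhs)

lemma span_wnormal: "span (wnormal ` dofs) = UNIV"
proof -
  have "lump J (\<lambda>j k. (\<psi> k * lenX J X j) *\<^sub>R nu J X j) \<in> span (wnormal ` dofs)" if "\<psi> \<in> FE per J" for \<psi>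
  proof -
    have "lump J (\<lambda>j k. (\<psi> k * lenX J X j) *\<^sub>R nu J X j) = (\<Sum>i\<in>dofs. \<psi> i *\<^sub>R wnormal i)"
      using lump_regroup[OF that, of "\<lambda>j k. lenX J X j *\<^sub>R nu J X j"] by (simp add: wnormal_def)
    also have "\<dots> \<in> span (wnormal ` dofs)"
      by (intro span_sum span_scale span_base) auto
    finally show ?thesis .
  qed
  then have "span {lump J (\<lambda>j k. (\<psi> k * lenX J X j) *\<^sub>R nu J X j) | \<psi>. \<psi> \<in> FE per J} \<subseteq> span (wnormal ` dofs)"
    by (intro span_minimal) auto
  then show ?thesis
    using normals_span by auto
qed

lemma curvature_FE: "curvature x \<in> FE per J"
  unfolding FE_def curvature_def dof_def using J_pos by auto

lemma curvature_dof: "i \<in> dofs \<Longrightarrow> curvature x i = inv (nodal_rhs i) ((x i \<bullet> wnormal i) / \<Delta>t)"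
  by (simp add: curvature_def dofs_le dof_dofs)

lemma lump_hat_normal:
  assumes "\<eta> \<in> FE per J"
  shows "lump J (\<lambda>j k. hat i k * ((nu J X j \<bullet> \<eta> k) * lenX J X j)) = \<eta> i \<bullet> wnormal i"
  unfolding wnormal_def inner_lump
proof (rule lump_cong)
  fix j k
  show "hat i k * ((nu J X j \<bullet> \<eta> k) * lenX J X j) = \<eta> i \<bullet> (hat i k * lenX J X j) *\<^sub>R nu J X j"
    using FE_dof[OF assms, of k] by (cases "dof k = i") (auto simp: hat_def inner_commute)
qed

lemma lump_hat_rhs:
  assumes "\<kappa> \<in> FE per J"
  shows "lump J (\<lambda>j k. hat i k * ((f (\<kappa> k - Kop per J d0 X \<kappa> k) - G0) * lenX J X j)) = nodal_rhs i (\<kappa> i)"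
  unfolding nodal_rhs_def
proof (rule lump_cong)
  fix j k
  assume k: "k \<le> J"
  show "hat i k * ((f (\<kappa> k - Kop per J d0 X \<kappa> k) - G0) * lenX J X j)
      = hat i k * lenX J X j * (f (Kslope J d0 k * \<kappa> i - Koffset per J d0 X k) - G0)"
    using FE_dof[OF assms, of k] diff_Kop_affine[OF k, of \<kappa>] by (cases "dof k = i") (auto simp: hat_def)
qed

text \<open>Tested with the nodal basis function of \<open>i\<close>, the first equation reads
  \<open>nodal_rhs i (\<kappa> i) = (\<delta>X i \<bullet> wnormal i) / \<Delta>t\<close>, which \<open>curvature\<close> solves for \<open>\<kappa>\<close>.\<close>

lemma curvature_normal_eq:
  assumes x: "x \<in> FE per J" and \<psi>: "\<psi> \<in> FE per J"
  shows "lump J (\<lambda>j k. ((x k \<bullet> nu J X j) / \<Delta>t) * \<psi> k * lenX J X j)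
    = lump J (\<lambda>j k. f (curvature x k - Kop per J d0 X (curvature x) k) * \<psi> k * lenX J X j)
      - G0 * lump J (\<lambda>j k. \<psi> k * lenX J X j)"
proof -
  define R where "R j k = (1 / \<Delta>t) * ((nu J X j \<bullet> x k) * lenX J X j)
    - (f (curvature x k - Kop per J d0 X (curvature x) k) - G0) * lenX J X j" for j k
  have "lump J (\<lambda>j k. \<psi> k * R j k) = (\<Sum>i\<in>dofs. \<psi> i * lump J (\<lambda>j k. hat i k * R j k))"
    by (rule lump_regroup_real[OF \<psi>])
  also have "\<dots> = 0"
  proof (rule sum.neutral, intro ballI)
    fix i
    assume i: "i \<in> dofs"
    have "lump J (\<lambda>j k. hat i k * R j k)
        = (1 / \<Delta>t) * lump J (\<lambda>j k. hat i k * ((nu J X j \<bullet> x k) * lenX J X j))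
          - lump J (\<lambda>j k. hat i k * ((f (curvature x k - Kop per J d0 X (curvature x) k) - G0) * lenX J X j))"
      unfolding lump_mult_left[symmetric] lump_diff[symmetric]
      by (rule lump_cong) (simp add: R_def algebra_simps)
    also have "\<dots> = (x i \<bullet> wnormal i) / \<Delta>t - nodal_rhs i (curvature x i)"
      by (simp add: lump_hat_normal[OF x] lump_hat_rhs[OF curvature_FE])
    also have "\<dots> = 0"
      unfolding curvature_dof[OF i]
      by (simp add: inv_increasing_unbounded_right[OF increasing_unbounded_nodal_rhs[OF i]])
    finally show "\<psi> i * lump J (\<lambda>j k. hat i k * R j k) = 0"
      by simp
  qed
  finally have "lump J (\<lambda>j k. \<psi> k * R j k) = 0" .
  moreover have "lump J (\<lambda>j k. \<psi> k * R j k)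
      = lump J (\<lambda>j k. ((x k \<bullet> nu J X j) / \<Delta>t) * \<psi> k * lenX J X j)
        - lump J (\<lambda>j k. f (curvature x k - Kop per J d0 X (curvature x) k) * \<psi> k * lenX J X j)
        + G0 * lump J (\<lambda>j k. \<psi> k * lenX J X j)"
    unfolding lump_diff[symmetric] lump_mult_left[symmetric] lump_add[symmetric]
    by (rule lump_cong) (simp add: R_def inner_commute algebra_simps)
  ultimately show ?thesis
    by simp
qed

lemma lump_curvature_regroup:
  assumes \<kappa>: "\<kappa> \<in> FE per J" and \<eta>: "\<eta> \<in> FE per J"
  shows "lump J (\<lambda>j k. \<kappa> k * (nu J X j \<bullet> \<eta> k) * lenX J X j) = (\<Sum>i\<in>dofs. \<kappa> i * (\<eta> i \<bullet> wnormal i))"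
proof -
  have "lump J (\<lambda>j k. \<kappa> k * (nu J X j \<bullet> \<eta> k) * lenX J X j)
      = (\<Sum>i\<in>dofs. \<kappa> i * lump J (\<lambda>j k. hat i k * ((nu J X j \<bullet> \<eta> k) * lenX J X j)))"
    using lump_regroup_real[OF \<kappa>, of "\<lambda>j k. (nu J X j \<bullet> \<eta> k) * lenX J X j"] by (simp add: mult.assoc)
  also have "\<dots> = (\<Sum>i\<in>dofs. \<kappa> i * (\<eta> i \<bullet> wnormal i))"
    by (simp add: lump_hat_normal[OF \<eta>])
  finally show ?thesis .
qed

lemma energy_line:
  "energy (\<lambda>k. x k + t *\<^sub>R \<eta> k)
    = (\<Sum>i\<in>dofs. \<Delta>t * primitive (inv (nodal_rhs i)) ((x i \<bullet> wnormal i) / \<Delta>t + t * ((\<eta> i \<bullet> wnormal i) / \<Delta>t)))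
      + (stiff J X X x + stiff J X x x / 2 - bdry_load J d1 d2 \<rho> x)
      + t * (stiff J X X \<eta> + stiff J X x \<eta> - bdry_load J d1 d2 \<rho> \<eta>) + t\<^sup>2 * (stiff J X \<eta> \<eta> / 2)"
proof -
  have "stiff J X (\<lambda>k. x k + t *\<^sub>R \<eta> k) (\<lambda>k. x k + t *\<^sub>R \<eta> k)
      = stiff J X x x + 2 * t * stiff J X x \<eta> + t\<^sup>2 * stiff J X \<eta> \<eta>"
    unfolding stiff_add_scaleR_left stiff_add_scaleR_right using stiff_commute[of J X \<eta> x]
    by (simp add: algebra_simps power2_eq_square)
  moreover have "((x i + t *\<^sub>R \<eta> i) \<bullet> wnormal i) / \<Delta>t
      = (x i \<bullet> wnormal i) / \<Delta>t + t * ((\<eta> i \<bullet> wnormal i) / \<Delta>t)" for i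
    by (simp add: inner_add_left add_divide_distrib)
  ultimately show ?thesis
    unfolding energy_def stiff_add_scaleR_right bdry_load_add_scaleR by (simp add: algebra_simps)
qed

lemma has_real_derivative_energy_line:
  "((\<lambda>t. energy (\<lambda>k. x k + t *\<^sub>R \<eta> k)) has_real_derivative
     (\<Sum>i\<in>dofs. curvature x i * (\<eta> i \<bullet> wnormal i)) + stiff J X X \<eta> + stiff J X x \<eta> - bdry_load J d1 d2 \<rho> \<eta>)
   (at 0)"
proof -
  define s where "s i = (x i \<bullet> wnormal i) / \<Delta>t" for i
  define r where "r i = (\<eta> i \<bullet> wnormal i) / \<Delta>t" for i
  have "((\<lambda>t. \<Delta>t * primitive (inv (nodal_rhs i)) (s i + t * r i)) has_real_derivative
      \<Delta>t * (inv (nodal_rhs i) (s i) * r i)) (at 0)" if i: "i \<in> dofs" for i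
  proof -
    have "((\<lambda>t. s i + t * r i) has_real_derivative r i) (at 0)"
      by (auto intro!: derivative_eq_intros)
    moreover have "(primitive (inv (nodal_rhs i)) has_real_derivative inv (nodal_rhs i) (s i)) (at (s i))"
      by (rule has_real_derivative_primitive_inv_nodal_rhs[OF i])
    ultimately have "((\<lambda>t. primitive (inv (nodal_rhs i)) (s i + t * r i)) has_real_derivative
        inv (nodal_rhs i) (s i) * r i) (at 0)"
      using DERIV_chain2[of "primitive (inv (nodal_rhs i))" _ "\<lambda>t. s i + t * r i" 0 _ UNIV] by simp
    then show ?thesis
      by (rule DERIV_cmult)
  qed
  then have "((\<lambda>t. \<Sum>i\<in>dofs. \<Delta>t * primitive (inv (nodal_rhs i)) (s i + t * r i)) has_real_derivative
      (\<Sum>i\<in>dofs. curvature x i * (\<eta> i \<bullet> wnormal i))) (at 0)"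
    using dt_pos by (intro DERIV_sum) (simp add: curvature_dof s_def r_def)
  moreover have "((\<lambda>t. C0 + t * C1 + t\<^sup>2 * C2) has_real_derivative C1) (at 0)" for C0 C1 C2 :: real
    by (auto intro!: derivative_eq_intros)
  ultimately have "((\<lambda>t. (\<Sum>i\<in>dofs. \<Delta>t * primitive (inv (nodal_rhs i)) (s i + t * r i))
        + ((stiff J X X x + stiff J X x x / 2 - bdry_load J d1 d2 \<rho> x)
        + t * (stiff J X X \<eta> + stiff J X x \<eta> - bdry_load J d1 d2 \<rho> \<eta>) + t\<^sup>2 * (stiff J X \<eta> \<eta> / 2)))
      has_real_derivative (\<Sum>i\<in>dofs. curvature x i * (\<eta> i \<bullet> wnormal i))
        + (stiff J X X \<eta> + stiff J X x \<eta> - bdry_load J d1 d2 \<rho> \<eta>)) (at 0)"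
    by (rule DERIV_add)
  then show ?thesis
    unfolding energy_line s_def[symmetric] r_def[symmetric] by (simp add: algebra_simps)
qed

lemma energy_minimizer_curvature_eq:
  assumes x: "x \<in> Vh_dd per J dD d0 d1 d2"
    and min: "\<forall>y\<in>Vh_dd per J dD d0 d1 d2. energy x \<le> energy y"
    and \<eta>: "\<eta> \<in> Vh_dd per J dD d0 d1 d2"
  shows "lump J (\<lambda>j k. curvature x k * (nu J X j \<bullet> \<eta> k) * lenX J X j) + stiff J X (\<lambda>k. X k + x k) \<eta>
    = bdry_load J d1 d2 \<rho> \<eta>"
proof -
  have "(\<Sum>i\<in>dofs. curvature x i * (\<eta> i \<bullet> wnormal i)) + stiff J X X \<eta> + stiff J X x \<eta> - bdry_load J d1 d2 \<rho> \<eta> = 0"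
  proof (rule DERIV_local_min[OF has_real_derivative_energy_line zero_less_one], intro allI impI)
    fix t :: real
    show "energy (\<lambda>k. x k + 0 *\<^sub>R \<eta> k) \<le> energy (\<lambda>k. x k + t *\<^sub>R \<eta> k)"
      using min Vh_dd_add_scaleR[OF x \<eta>] by simp
  qed
  then show ?thesis
    using lump_curvature_regroup[OF curvature_FE Vh_dd_imp_FE[OF \<eta>]] stiff_add_left[of J X X x \<eta>] by simp
qed

definition normal_mass :: "(nat \<Rightarrow> real \<times> real) \<Rightarrow> real"
  where "normal_mass x = (\<Sum>i\<in>dofs. \<bar>x i \<bullet> wnormal i\<bar>)"

lemma normal_mass_nonneg: "0 \<le> normal_mass x"
  unfolding normal_mass_def by (auto intro: sum_nonneg)

lemma exists_norm_node_le:
  "\<exists>\<mu>>0. \<exists>c\<ge>0. \<forall>x a. a \<le> J \<longrightarrow> \<mu> * norm (x a) \<le> normal_mass x + c * total_jump J x"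
proof -
  obtain \<mu> where \<mu>: "\<mu> > 0" "\<And>v. \<mu> * norm v \<le> (\<Sum>i\<in>dofs. \<bar>v \<bullet> wnormal i\<bar>)"
    using norm_le_sum_abs_inner[OF finite_dofs span_wnormal] by blast
  define c where "c = 2 * (\<Sum>i\<in>dofs. norm (wnormal i))"
  have "\<mu> * norm (x a) \<le> normal_mass x + c * total_jump J x" if a: "a \<le> J" for x a
  proof -
    have "\<mu> * norm (x a) \<le> (\<Sum>i\<in>dofs. \<bar>x a \<bullet> wnormal i\<bar>)"
      by (rule \<mu>(2))
    also have "\<dots> \<le> (\<Sum>i\<in>dofs. \<bar>x i \<bullet> wnormal i\<bar> + 2 * total_jump J x * norm (wnormal i))"
    proof (rule sum_mono)
      fix i
      assume i: "i \<in> dofs"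
      have "\<bar>x a \<bullet> wnormal i\<bar> \<le> \<bar>x i \<bullet> wnormal i\<bar> + \<bar>(x a - x i) \<bullet> wnormal i\<bar>"
        using abs_triangle_ineq[of "x i \<bullet> wnormal i" "(x a - x i) \<bullet> wnormal i"] by (simp add: inner_diff_left)
      also have "\<bar>(x a - x i) \<bullet> wnormal i\<bar> \<le> norm (x a - x i) * norm (wnormal i)"
        by (rule Cauchy_Schwarz_ineq2)
      also have "\<dots> \<le> 2 * total_jump J x * norm (wnormal i)"
        using norm_diff_le_total_jump[OF a dofs_le[OF i]] by (intro mult_right_mono) auto
      finally show "\<bar>x a \<bullet> wnormal i\<bar> \<le> \<bar>x i \<bullet> wnormal i\<bar> + 2 * total_jump J x * norm (wnormal i)"
        by simp
    qed
    also have "\<dots> = normal_mass x + c * total_jump J x"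
      by (simp add: normal_mass_def c_def sum.distrib sum_distrib_left algebra_simps)
    finally show ?thesis .
  qed
  moreover have "c \<ge> 0"
    unfolding c_def by (auto intro: sum_nonneg)
  ultimately show ?thesis
    using \<mu>(1) by blast
qed

lemma primitive_sum_superlinear:
  "\<exists>C. \<forall>x. M * normal_mass x - C
    \<le> (\<Sum>i\<in>dofs. \<Delta>t * primitive (inv (nodal_rhs i)) ((x i \<bullet> wnormal i) / \<Delta>t))"
proof -
  have "\<forall>i\<in>dofs. \<exists>C. \<forall>s. M * \<bar>s\<bar> - C \<le> primitive (inv (nodal_rhs i)) s"
    using primitive_inv_superlinear[OF increasing_unbounded_nodal_rhs] by blast
  then obtain C where C: "\<And>i s. i \<in> dofs \<Longrightarrow> M * \<bar>s\<bar> - C i \<le> primitive (inv (nodal_rhs i)) s"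
    by (auto dest!: bchoice)
  have "M * \<bar>x i \<bullet> wnormal i\<bar> - \<Delta>t * C i
      \<le> \<Delta>t * primitive (inv (nodal_rhs i)) ((x i \<bullet> wnormal i) / \<Delta>t)" if "i \<in> dofs" for x i
  proof -
    have "M * \<bar>(x i \<bullet> wnormal i) / \<Delta>t\<bar> - C i \<le> primitive (inv (nodal_rhs i)) ((x i \<bullet> wnormal i) / \<Delta>t)"
      by (rule C[OF that])
    then have "\<Delta>t * (M * \<bar>(x i \<bullet> wnormal i) / \<Delta>t\<bar> - C i)
        \<le> \<Delta>t * primitive (inv (nodal_rhs i)) ((x i \<bullet> wnormal i) / \<Delta>t)"
      using dt_pos by (intro mult_left_mono) auto
    moreover have "\<Delta>t * (M * \<bar>(x i \<bullet> wnormal i) / \<Delta>t\<bar> - C i) = M * \<bar>x i \<bullet> wnormal i\<bar> - \<Delta>t * C i"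
      using dt_pos by (simp add: abs_div field_simps)
    ultimately show ?thesis
      by simp
  qed
  then have "M * normal_mass x - \<Delta>t * (\<Sum>i\<in>dofs. C i)
      \<le> (\<Sum>i\<in>dofs. \<Delta>t * primitive (inv (nodal_rhs i)) ((x i \<bullet> wnormal i) / \<Delta>t))" for x
    unfolding normal_mass_def sum_distrib_left sum_subtractf[symmetric] by (rule sum_mono)
  then show ?thesis
    by blast
qed

lemma energy_coercive: "\<exists>C. \<forall>x. normal_mass x + total_jump J x - C \<le> energy x"
proof -
  obtain \<mu> c where \<mu>: "\<mu> > 0" and c: "c \<ge> 0"
    and node: "\<And>x a. a \<le> J \<Longrightarrow> \<mu> * norm (x a) \<le> normal_mass x + c * total_jump J x"
    using exists_norm_node_le by blast
  define cL where "cL = (\<Sum>p\<in>d1. \<bar>\<rho> p\<bar>) + (\<Sum>p\<in>d2. \<bar>\<rho> p\<bar>)"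
  define L where "L = (\<Sum>j = 1..J. lenX J X j)"
  define \<beta> where "\<beta> = 2 + cL * c / \<mu>"
  obtain C where C: "\<And>x. (1 + cL / \<mu>) * normal_mass x - C
      \<le> (\<Sum>i\<in>dofs. \<Delta>t * primitive (inv (nodal_rhs i)) ((x i \<bullet> wnormal i) / \<Delta>t))"
    using primitive_sum_superlinear by blast
  have L: "L > 0"
    unfolding L_def using lenX_pos J_pos by (intro sum_pos) auto
  have "normal_mass x + total_jump J x - (C + \<beta>\<^sup>2 * L / 2) \<le> energy x" for x
  proof -
    define T where "T = normal_mass x"
    define D where "D = total_jump J x"
    have "norm (x a) \<le> (T + c * D) / \<mu>" if "a \<le> J" for a
      using node[OF that] \<mu> unfolding T_def D_def by (simp add: pos_le_divide_eq mult.commute)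
    then have "\<bar>bdry_load J d1 d2 \<rho> x\<bar> \<le> cL * ((T + c * D) / \<mu>)"
      unfolding cL_def by (rule abs_bdry_load_le[OF d1_sub d2_sub])
    then have bdry: "bdry_load J d1 d2 \<rho> x \<le> cL * ((T + c * D) / \<mu>)"
      by simp
    have "0 \<le> (D - \<beta> * L)\<^sup>2 / (2 * L)"
      using L by simp
    then have "\<beta> * D - \<beta>\<^sup>2 * L / 2 \<le> D\<^sup>2 / L / 2"
      using L by (simp add: power2_eq_square field_simps)
    also have "\<dots> \<le> stiff J X x x / 2"
      using stiff_self_ge[OF J_pos lenX_pos, of x] unfolding D_def L_def by simp
    finally have quad: "\<beta> * D - \<beta>\<^sup>2 * L / 2 \<le> stiff J X x x / 2" .
    have "(1 + cL / \<mu>) * T - D + \<beta> * D - cL * ((T + c * D) / \<mu>) = T + D"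
      using \<mu> by (simp add: \<beta>_def field_simps)
    moreover have "- D \<le> stiff J X X x"
      using stiff_cross_ge[OF lenX_pos, of x] unfolding D_def .
    ultimately show ?thesis
      using C[of x] bdry quad unfolding energy_def T_def[symmetric] D_def[symmetric] by linarith
  qed
  then show ?thesis
    by blast
qed

lemma energy_sublevel_bounded: "\<exists>R. \<forall>x a. energy x \<le> energy (\<lambda>k. 0) \<longrightarrow> a \<le> J \<longrightarrow> norm (x a) \<le> R"
proof -
  obtain \<mu> c where \<mu>: "\<mu> > 0" and c: "c \<ge> 0"
    and node: "\<And>x a. a \<le> J \<Longrightarrow> \<mu> * norm (x a) \<le> normal_mass x + c * total_jump J x"
    using exists_norm_node_le by blast
  obtain C where C: "\<And>x. normal_mass x + total_jump J x - C \<le> energy x"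
    using energy_coercive by blast
  have "norm (x a) \<le> (1 + c) * (energy (\<lambda>k. 0) + C) / \<mu>" if "energy x \<le> energy (\<lambda>k. 0)" "a \<le> J" for x a
  proof -
    have "\<mu> * norm (x a) \<le> normal_mass x + c * total_jump J x"
      by (rule node[OF that(2)])
    also have "\<dots> \<le> (1 + c) * (normal_mass x + total_jump J x)"
      using c normal_mass_nonneg[of x] total_jump_nonneg[of J x] by (simp add: algebra_simps)
    also have "\<dots> \<le> (1 + c) * (energy (\<lambda>k. 0) + C)"
      using C[of x] that(1) c by (intro mult_left_mono) auto
    finally show ?thesis
      using \<mu> by (simp add: pos_le_divide_eq mult.commute)
  qed
  then show ?thesis
    by blast
qed

lemma continuous_on_energy: "continuous_on UNIV energy"
proof -
  have l: "j \<in> {1..J} \<Longrightarrow> lenX J X j \<noteq> 0" for j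
    using lenX_pos by fastforce
  have "continuous_on UNIV (\<lambda>x. \<Sum>i\<in>dofs. \<Delta>t * primitive (inv (nodal_rhs i)) ((x i \<bullet> wnormal i) / \<Delta>t))"
  proof (rule continuous_on_sum)
    fix i
    assume i: "i \<in> dofs"
    have "continuous_on UNIV (primitive (inv (nodal_rhs i)))"
      using has_real_derivative_primitive_inv_nodal_rhs[OF i]
      by (meson DERIV_isCont continuous_at_imp_continuous_on)
    then have "continuous_on UNIV (\<lambda>x. primitive (inv (nodal_rhs i)) ((x i \<bullet> wnormal i) / \<Delta>t))"
      by (rule continuous_on_compose2) (use dt_pos in \<open>auto intro!: continuous_intros\<close>)
    then show "continuous_on UNIV (\<lambda>x. \<Delta>t * primitive (inv (nodal_rhs i)) ((x i \<bullet> wnormal i) / \<Delta>t))"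
      by (rule continuous_on_mult_left)
  qed
  moreover have "continuous_on UNIV (\<lambda>x. stiff J X y x)" for y
    unfolding stiff_def Xrho_def by (intro continuous_intros) (use l J_pos in auto)
  moreover have "continuous_on UNIV (\<lambda>x. stiff J X x x / 2)"
    unfolding stiff_def Xrho_def by (intro continuous_intros) (use l J_pos in auto)
  moreover have "continuous_on UNIV (\<lambda>x. bdry_load J d1 d2 \<rho> x)"
    unfolding bdry_load_def by (intro continuous_intros)
  ultimately show ?thesis
    unfolding energy_def[abs_def] by (intro continuous_on_diff continuous_on_add) blast+
qed

lemma exists_energy_minimizer:
  "\<exists>x\<in>Vh_dd per J dD d0 d1 d2. \<forall>y\<in>Vh_dd per J dD d0 d1 d2. energy x \<le> energy y"
proof -
  let ?V = "Vh_dd per J dD d0 d1 d2"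
  obtain R where R: "\<And>x a. energy x \<le> energy (\<lambda>k. 0) \<Longrightarrow> a \<le> J \<Longrightarrow> norm (x a) \<le> R"
    using energy_sublevel_bounded by blast
  define B where "B i = (if i \<le> J then cball (0::real \<times> real) R else {0})" for i
  define S where "S = PiE UNIV B \<inter> ?V"
  have "compact (PiE UNIV B)"
    using compactin_PiE[of "\<lambda>i. euclidean" UNIV B] by (simp add: B_def euclidean_product_topology)
  then have S: "compact S"
    unfolding S_def using closed_Vh_dd by (rule compact_Int_closed)
  have zero: "(\<lambda>k. 0) \<in> S"
    using R[of "\<lambda>k. 0" 0] by (auto simp: S_def B_def Vh_dd_zero)
  then obtain x where x: "x \<in> S" and x_min: "\<And>y. y \<in> S \<Longrightarrow> energy x \<le> energy y"
    using continuous_attains_inf[OF S _ continuous_on_subset[OF continuous_on_energy]] by blast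
  have "energy x \<le> energy y" if y: "y \<in> ?V" for y
  proof (cases "energy y \<le> energy (\<lambda>k. 0)")
    case True
    then have "y \<in> S"
      using y R[OF True] Vh_dd_imp_FE[OF y] by (auto simp: S_def B_def FE_def)
    then show ?thesis
      by (rule x_min)
  next
    case False
    then show ?thesis
      using x_min[OF zero] by simp
  qed
  then show ?thesis
    using x unfolding S_def by blast
qed

lemma exists_solution:
  assumes "G0 = \<theta> * Gm per J d0 f X \<kappa>m"
  shows "\<exists>\<delta>X \<kappa>. is_solution per J dD d0 d1 d2 \<rho> (-\<infinity>) \<infinity> f \<theta> \<Delta>t X \<kappa>m \<delta>X \<kappa>"
proof -
  obtain x where x: "x \<in> Vh_dd per J dD d0 d1 d2"
    and min: "\<forall>y\<in>Vh_dd per J dD d0 d1 d2. energy x \<le> energy y"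
    using exists_energy_minimizer by blast
  have "is_solution per J dD d0 d1 d2 \<rho> (-\<infinity>) \<infinity> f \<theta> \<Delta>t X \<kappa>m x (curvature x)"
    unfolding is_solution_iff[OF J_pos]
  proof (intro conjI ballI allI impI)
    fix \<psi> :: "nat \<Rightarrow> real"
    assume "\<psi> \<in> FE per J"
    then show "lump J (\<lambda>j k. ((x k \<bullet> nu J X j) / \<Delta>t) * \<psi> k * lenX J X j)
        = lump J (\<lambda>j k. f (curvature x k - Kop per J d0 X (curvature x) k) * \<psi> k * lenX J X j)
          - \<theta> * Gm per J d0 f X \<kappa>m * lump J (\<lambda>j k. \<psi> k * lenX J X j)"
      using curvature_normal_eq[OF Vh_dd_imp_FE[OF x]] unfolding assms by blast
  qed (use x curvature_FE energy_minimizer_curvature_eq[OF x min] in auto)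
  then show ?thesis
    by blast
qed

end

theorem theoremB1:
  fixes per :: bool and J :: nat and dD d0 d1 d2 :: "nat set" and \<rho> :: "nat \<Rightarrow> real"
    and a b :: ereal and f :: "real \<Rightarrow> real" and X :: "nat \<Rightarrow> real \<times> real"
    and \<Delta>t \<theta> :: real and \<kappa>m :: "nat \<Rightarrow> real"
  assumes J: "J \<ge> 3"
    and per_bd: "per \<longrightarrow> dD = {} \<and> d0 = {} \<and> d1 = {} \<and> d2 = {}"
    and open_bd: "\<not> per \<longrightarrow> dD \<union> d0 \<union> d1 \<union> d2 = {0, 1} \<and>
        dD \<inter> d0 = {} \<and> dD \<inter> d1 = {} \<and> dD \<inter> d2 = {} \<and>
        d0 \<inter> d1 = {} \<and> d0 \<inter> d2 = {} \<and> d1 \<inter> d2 = {}"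
    and rho: "\<forall>p\<in>{0, 1}. \<bar>\<rho> p\<bar> \<le> 1"
    and ab: "a < 0" "0 < b"
    and f_cont: "continuous_on {x. a < ereal x \<and> ereal x < b} f"
    and f_mono: "strict_mono_on {x. a < ereal x \<and> ereal x < b} f"
    and f_onto: "f ` {x. a < ereal x \<and> ereal x < b} = UNIV"
    and X: "X \<in> Vh_d0 per J d0"
    and A1: "\<forall>j\<in>{1..J}. lenX J X j > 0"
    and A2: "\<forall>s\<in>{0..1}. s \<notin> real ` d0 \<longrightarrow> interp J X s \<bullet> e1 > 0"
    and B: "span {lump J (\<lambda>j k. (\<psi> k * lenX J X j) *\<^sub>R nu J X j) | \<psi>. \<psi> \<in> FE per J} = UNIV"
    and dt: "\<Delta>t > 0"
    and theta: "\<theta> = 0 \<or> \<theta> = 1"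
    and kappam: "\<theta> = 1 \<longrightarrow> \<kappa>m \<in> FE per J \<and>
       (\<forall>k\<le>J. a < ereal (\<kappa>m k - Kop per J d0 X \<kappa>m k) \<and> ereal (\<kappa>m k - Kop per J d0 X \<kappa>m k) < b)"
  shows "(a = -\<infinity> \<and> b = \<infinity> \<longrightarrow>
           (\<exists>\<delta>X \<kappa>. is_solution per J dD d0 d1 d2 \<rho> a b f \<theta> \<Delta>t X \<kappa>m \<delta>X \<kappa>)) \<and>
         (\<forall>\<delta>X1 \<kappa>1 \<delta>X2 \<kappa>2.
            is_solution per J dD d0 d1 d2 \<rho> a b f \<theta> \<Delta>t X \<kappa>m \<delta>X1 \<kappa>1 \<and>
            is_solution per J dD d0 d1 d2 \<rho> a b f \<theta> \<Delta>t X \<kappa>m \<delta>X2 \<kappa>2 \<longrightarrow>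
            \<delta>X1 = \<delta>X2 \<and> \<kappa>1 = \<kappa>2)"
proof -
  have J_pos: "J > 0"
    using J by simp
  have "\<exists>\<delta>X \<kappa>. is_solution per J dD d0 d1 d2 \<rho> a b f \<theta> \<Delta>t X \<kappa>m \<delta>X \<kappa>" if ab_inf: "a = -\<infinity> \<and> b = \<infinity>"
  proof -
    have U: "{x. a < ereal x \<and> ereal x < b} = UNIV"
      using ab_inf by auto
    have d12: "d1 \<subseteq> {0, 1}" "d2 \<subseteq> {0, 1}"
      using per_bd open_bd by (cases per; blast)+
    interpret energy_scheme per J dD d0 d1 d2 \<rho> f X \<Delta>t "\<theta> * Gm per J d0 f X \<kappa>m"
      using J_pos f_cont f_mono f_onto A1 dt B d12 unfolding U by unfold_locales simp_all
    show ?thesis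
      using exists_solution[OF refl] ab_inf by simp
  qed
  moreover have "\<delta>X1 = \<delta>X2 \<and> \<kappa>1 = \<kappa>2"
    if "is_solution per J dD d0 d1 d2 \<rho> a b f \<theta> \<Delta>t X \<kappa>m \<delta>X1 \<kappa>1"
      and "is_solution per J dD d0 d1 d2 \<rho> a b f \<theta> \<Delta>t X \<kappa>m \<delta>X2 \<kappa>2" for \<delta>X1 \<kappa>1 \<delta>X2 \<kappa>2
    using is_solution_unique[OF J_pos f_mono A1 B dt that] .
  ultimately show ?thesis
    by blast
qed

end
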